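(* If $\varphi \in \mathcal L_\Diamond$ is valid over the class of all dynamical systems, then ${\sf ITL}^0_\Diamond \vdash \varphi$.
   Context: $\mathcal L_\Diamond$ is the language built from a countably infinite set of propositional variables and $\bot$ using $\wedge,\vee,\to$, the modality ${\circ}$ ("next") and the modality $\Diamond$ ("eventually"); $\neg\varphi$ abbreviates $\varphi\to\bot$. A dynamical (topological) system is a triple $(X,\mathcal T,f)$ with $(X,\mathcal T)$ a topological space and $f\colon X\to X$ continuous. A valuation $\llbracket\cdot\rrbracket$ assigns an open set to each formula with $\llbracket\bot\rrbracket=\varnothing$, $\llbracket\varphi\wedge\psi\rrbracket=\llbracket\varphi\rrbracket\cap\llbracket\psi\rrbracket$, $\llbracket\varphi\vee\psi\rrbracket=\llbracket\varphi\rrbracket\cup\llbracket\psi\rrbracket$, $\llbracket\varphi\to\psi\rrbracket=\big((X\setminus\llbracket\varphi\rrbracket)\cup\llbracket\psi\rrbracket\big)^\circ$ (interior), $\llbracket{\circ}\varphi\rrbracket=f^{-1}\llbracket\varphi\rrbracket$, $\llbracket\Diamond\varphi\rrbracket=\bigcup_{n<\omega}f^{-n}\llbracket\varphi\rrbracket$. A formula is valid over the class of dynamical systems if $\llbracket\varphi\rrbracket=X$ for every dynamical system and every valuation on it. The logic ${\sf ITL}^0_\Diamond$ is the least set of $\mathcal L_\Diamond$-formulas containing all axioms of intuitionistic propositional logic and the axioms $\neg{\circ}\bot$; ${\circ}\varphi\wedge{\circ}\psi\to{\circ}(\varphi\wedge\psi)$; ${\circ}(\varphi\vee\psi)\to{\circ}\varphi\vee{\circ}\psi$;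 ${\circ}(\varphi\to\psi)\to({\circ}\varphi\to{\circ}\psi)$; $\varphi\vee{\circ}\Diamond\varphi\to\Diamond\varphi$, and closed under modus ponens (from $\varphi$ and $\varphi\to\psi$ infer $\psi$), necessitation (from $\varphi$ infer ${\circ}\varphi$), the rule from $\varphi\to\psi$ infer $\Diamond\varphi\to\Diamond\psi$, and the induction rule from ${\circ}\varphi\to\varphi$ infer $\Diamond\varphi\to\varphi$. (Note that the Fischer Servi axiom $({\circ}\varphi\to{\circ}\psi)\to{\circ}(\varphi\to\psi)$ is not included.) *)

theory Defs
  imports "HOL-Analysis.Abstract_Topology"
begin

datatype fm =
    Var nat
  | Bot
  | And fm fm
  | Or fm fm
  | Imp fm fm
  | Next fm
  | Diam fm

definition Neg :: "fm \<Rightarrow> fm" where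
  "Neg \<phi> = Imp \<phi> Bot"

definition dynamical_system :: "'a topology \<Rightarrow> ('a \<Rightarrow> 'a) \<Rightarrow> bool" where
  "dynamical_system T f \<longleftrightarrow> continuous_map T T f"

fun sem :: "'a topology \<Rightarrow> ('a \<Rightarrow> 'a) \<Rightarrow> (nat \<Rightarrow> 'a set) \<Rightarrow> fm \<Rightarrow> 'a set" where
  "sem T f V (Var p) = V p"
| "sem T f V Bot = {}"
| "sem T f V (And \<phi> \<psi>) = sem T f V \<phi> \<inter> sem T f V \<psi>"
| "sem T f V (Or \<phi> \<psi>) = sem T f V \<phi> \<union> sem T f V \<psi>"
| "sem T f V (Imp \<phi> \<psi>) = T interior_of ((topspace T - sem T f V \<phi>) \<union> sem T f V \<psi>)"
| "sem T f V (Next \<phi>) = {x \<in> topspace T. f x \<in> sem T f V \<phi>}"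
| "sem T f V (Diam \<phi>) = (\<Union>n. {x \<in> topspace T. (f ^^ n) x \<in> sem T f V \<phi>})"

definition valid_over :: "'a itself \<Rightarrow> fm \<Rightarrow> bool" where
  "valid_over (_ :: 'a itself) \<phi> \<longleftrightarrow>
     (\<forall>(T :: 'a topology) f V. dynamical_system T f \<longrightarrow> (\<forall>p. openin T (V p))
        \<longrightarrow> sem T f V \<phi> = topspace T)"

inductive prov :: "fm \<Rightarrow> bool" where
  ax_K:  "prov (Imp \<phi> (Imp \<psi> \<phi>))"
| ax_S:  "prov (Imp (Imp \<phi> (Imp \<psi> \<chi>)) (Imp (Imp \<phi> \<psi>) (Imp \<phi> \<chi>)))"
| ax_conjE1: "prov (Imp (And \<phi> \<psi>) \<phi>)"
| ax_conjE2: "prov (Imp (And \<phi> \<psi>) \<psi>)"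
| ax_conjI: "prov (Imp \<phi> (Imp \<psi> (And \<phi> \<psi>)))"
| ax_disjI1: "prov (Imp \<phi> (Or \<phi> \<psi>))"
| ax_disjI2: "prov (Imp \<psi> (Or \<phi> \<psi>))"
| ax_disjE: "prov (Imp (Imp \<phi> \<chi>) (Imp (Imp \<psi> \<chi>) (Imp (Or \<phi> \<psi>) \<chi>)))"
| ax_efq: "prov (Imp Bot \<phi>)"
| ax_next_bot: "prov (Neg (Next Bot))"
| ax_next_and: "prov (Imp (And (Next \<phi>) (Next \<psi>)) (Next (And \<phi> \<psi>)))"
| ax_next_or: "prov (Imp (Next (Or \<phi> \<psi>)) (Or (Next \<phi>) (Next \<psi>)))"
| ax_next_K: "prov (Imp (Next (Imp \<phi> \<psi>)) (Imp (Next \<phi>) (Next \<psi>)))"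
| ax_diam_fix: "prov (Imp (Or \<phi> (Next (Diam \<phi>))) (Diam \<phi>))"
| mp: "prov \<phi> \<Longrightarrow> prov (Imp \<phi> \<psi>) \<Longrightarrow> prov \<psi>"
| nec: "prov \<phi> \<Longrightarrow> prov (Next \<phi>)"
| diam_mono: "prov (Imp \<phi> \<psi>) \<Longrightarrow> prov (Imp (Diam \<phi>) (Diam \<psi>))"
| ind: "prov (Imp (Next \<phi>) \<phi>) \<Longrightarrow> prov (Imp (Diam \<phi>) \<phi>)"

end

theory Submission
  imports Defs
begin

text \<open>Suppose \<open>\<phi>\<close> is not provable and let \<open>S\<close> be its finite set of subformulas. A
  moment is a finite tree of \<open>S\<close>-labels realized by prime theories of the calculus: the root by
  a theory \<open>\<Gamma>\<close>, the children by extensions of \<open>\<Gamma>\<close>, enough of them to refute every implication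
  of \<open>S\<close> outside \<open>\<Gamma>\<close>. Labels strictly grow along the tree, so there are finitely many
  moments. A simulation between moments imitates \<open>\<Gamma> \<mapsto> {\<psi>. Next \<psi> \<in> \<Gamma>}\<close>; every realized
  moment has a successor, and the induction rule, applied to the characteristic formulas of the
  moments from which \<open>\<psi>\<close> is unreachable, shows that every moment labelled \<open>Diam \<psi>\<close> reaches
  one labelled \<open>\<psi>\<close>. The fair infinite paths of moments, with the topology in which a basic
  neighbourhood of \<open>x\<close> consists of the paths running through subtrees of \<open>x 0, \<dots>, x n\<close>,
  and the shift map, form a dynamical system whose truth sets are read off the labels at time
  \<open>0\<close>; a path through a moment of a prime theory omitting \<open>\<phi>\<close> refutes \<open>\<phi>\<close>. Since this
  space embeds into \<open>nat set\<close>, a homeomorphic copy lives on the type \<open>'a\<close>.\<close>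

section \<open>Derivations and prime theories\<close>

lemma prov_Imp_refl: "prov (Imp \<phi> \<phi>)"
  using prov.mp[OF ax_K prov.mp[OF ax_K ax_S]] .

inductive derives :: "fm set \<Rightarrow> fm \<Rightarrow> bool" where
  derives_assm: "\<phi> \<in> \<Gamma> \<Longrightarrow> derives \<Gamma> \<phi>"
| derives_prov: "prov \<phi> \<Longrightarrow> derives \<Gamma> \<phi>"
| derives_mp: "derives \<Gamma> \<phi> \<Longrightarrow> derives \<Gamma> (Imp \<phi> \<psi>) \<Longrightarrow> derives \<Gamma> \<psi>"

lemma derives_mono: "derives \<Gamma> \<phi> \<Longrightarrow> \<Gamma> \<subseteq> \<Delta> \<Longrightarrow> derives \<Delta> \<phi>"
  by (induction rule: derives.induct) (auto intro: derives.intros)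

lemma derives_deduction: "derives (insert \<phi> \<Gamma>) \<psi> \<Longrightarrow> derives \<Gamma> (Imp \<phi> \<psi>)"
proof (induction "insert \<phi> \<Gamma>" \<psi> rule: derives.induct)
  case (derives_assm \<psi>)
  then consider "\<psi> = \<phi>" | "\<psi> \<in> \<Gamma>"
    by blast
  then show ?case
  proof cases
    case 1
    then show ?thesis using derives.derives_prov prov_Imp_refl by simp
  next
    case 2
    then show ?thesis
      using derives.derives_mp[OF derives.derives_assm derives.derives_prov[OF ax_K]] by blast
  qed
next
  case (derives_prov \<psi>)
  then show ?case
    using derives.derives_mp[OF derives.derives_prov derives.derives_prov[OF ax_K]] by blast
next
  case (derives_mp \<chi> \<psi>)
  then show ?case
    using derives.derives_mp[OF _ derives.derives_mp[OF _ derives.derives_prov[OF ax_S]]] by blast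
qed

lemma derives_empty: "derives {} \<phi> \<Longrightarrow> prov \<phi>"
  by (induction "{} :: fm set" \<phi> rule: derives.induct) (auto intro: prov.mp)

lemma derives_finite_subset: "derives \<Gamma> \<phi> \<Longrightarrow> \<exists>\<Gamma>'. finite \<Gamma>' \<and> \<Gamma>' \<subseteq> \<Gamma> \<and> derives \<Gamma>' \<phi>"
proof (induction rule: derives.induct)
  case (derives_assm \<phi> \<Gamma>)
  then show ?case
    by (intro exI[of _ "{\<phi>}"]) (simp add: derives.derives_assm)
next
  case (derives_prov \<phi> \<Gamma>)
  then show ?case
    by (intro exI[of _ "{}"]) (simp add: derives.derives_prov)
next
  case (derives_mp \<Gamma> \<phi> \<psi>)
  then obtain \<Gamma>1 \<Gamma>2 where "finite \<Gamma>1" "\<Gamma>1 \<subseteq> \<Gamma>" "derives \<Gamma>1 \<phi>"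
    and "finite \<Gamma>2" "\<Gamma>2 \<subseteq> \<Gamma>" "derives \<Gamma>2 (Imp \<phi> \<psi>)"
    by blast
  then have "derives (\<Gamma>1 \<union> \<Gamma>2) \<psi>"
    using derives.derives_mp derives_mono by (meson sup_ge1 sup_ge2)
  then show ?case
    using \<open>finite \<Gamma>1\<close> \<open>finite \<Gamma>2\<close> \<open>\<Gamma>1 \<subseteq> \<Gamma>\<close> \<open>\<Gamma>2 \<subseteq> \<Gamma>\<close> by blast
qed

definition prime_theory :: "fm set \<Rightarrow> bool" where
  "prime_theory \<Gamma> \<longleftrightarrow> (\<forall>\<phi>. derives \<Gamma> \<phi> \<longrightarrow> \<phi> \<in> \<Gamma>) \<and> Bot \<notin> \<Gamma> \<and>
     (\<forall>\<phi> \<psi>. Or \<phi> \<psi> \<in> \<Gamma> \<longrightarrow> \<phi> \<in> \<Gamma> \<or> \<psi> \<in> \<Gamma>)"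

lemma derives_Union_chain:
  assumes "derives (\<Union>\<C>) \<phi>" "\<C> \<noteq> {}" "subset.chain \<A> \<C>"
  shows "\<exists>\<Gamma>\<in>\<C>. derives \<Gamma> \<phi>"
proof -
  obtain \<Gamma>' where "finite \<Gamma>'" "\<Gamma>' \<subseteq> \<Union>\<C>" "derives \<Gamma>' \<phi>"
    using derives_finite_subset assms(1) by blast
  moreover obtain \<Gamma> where "\<Gamma> \<in> \<C>" "\<Gamma>' \<subseteq> \<Gamma>"
    using finite_subset_Union_chain[OF calculation(1,2) assms(2,3)] .
  ultimately show ?thesis
    using derives_mono by blast
qed

text \<open>A maximal theory not deriving \<open>\<psi>\<close> is prime, since adding any missing formula to it
  derives \<open>\<psi>\<close>.\<close>

lemma lindenbaum:
  assumes "\<not> derives \<Gamma> \<psi>"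
  shows "\<exists>\<Delta>. \<Gamma> \<subseteq> \<Delta> \<and> prime_theory \<Delta> \<and> \<psi> \<notin> \<Delta>"
proof -
  let ?A = "{\<Delta>. \<Gamma> \<subseteq> \<Delta> \<and> \<not> derives \<Delta> \<psi>}"
  have "\<Union>\<C> \<in> ?A" if "\<C> \<noteq> {}" "subset.chain ?A \<C>" for \<C>
  proof -
    have "\<Gamma> \<subseteq> \<Union>\<C>"
      using that unfolding subset.chain_def by blast
    moreover have "\<not> derives (\<Union>\<C>) \<psi>"
      using derives_Union_chain[OF _ that] that(2) unfolding subset.chain_def by blast
    ultimately show ?thesis
      by blast
  qed
  moreover have "?A \<noteq> {}"
    using assms by blast
  ultimately obtain \<Delta> where \<Delta>: "\<Delta> \<in> ?A" and max: "\<And>X. X \<in> ?A \<Longrightarrow> \<Delta> \<subseteq> X \<Longrightarrow> X = \<Delta>"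
    using subset_Zorn_nonempty[of ?A] by meson
  have missing: "derives \<Delta> (Imp \<phi> \<psi>)" if "\<phi> \<notin> \<Delta>" for \<phi>
    using max[of "insert \<phi> \<Delta>"] \<Delta> that derives_deduction by auto
  have "\<phi> \<in> \<Delta>" if "derives \<Delta> \<phi>" for \<phi>
    using missing derives_mp[OF that] \<Delta> by blast
  moreover have "Bot \<notin> \<Delta>"
    using \<Delta> derives_mp[OF derives_assm derives_prov[OF ax_efq]] by blast
  moreover have "\<phi> \<in> \<Delta> \<or> \<chi> \<in> \<Delta>" if "Or \<phi> \<chi> \<in> \<Delta>" for \<phi> \<chi>
  proof (rule ccontr)
    assume "\<not> (\<phi> \<in> \<Delta> \<or> \<chi> \<in> \<Delta>)"
    then have "derives \<Delta> (Imp (Or \<phi> \<chi>) \<psi>)"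
      using missing derives_mp[OF _ derives_mp[OF _ derives_prov[OF ax_disjE]]] by blast
    then show False
      using \<Delta> derives_mp[OF derives_assm[OF that]] by blast
  qed
  ultimately have "prime_theory \<Delta>"
    unfolding prime_theory_def by blast
  then show ?thesis
    using \<Delta> derives_assm by blast
qed

lemma prime_theory_derives: "prime_theory \<Gamma> \<Longrightarrow> derives \<Gamma> \<phi> \<Longrightarrow> \<phi> \<in> \<Gamma>"
  unfolding prime_theory_def by blast

lemma prime_theory_prov: "prime_theory \<Gamma> \<Longrightarrow> prov \<phi> \<Longrightarrow> \<phi> \<in> \<Gamma>"
  using prime_theory_derives derives_prov by blast

lemma prime_theory_mp: "prime_theory \<Gamma> \<Longrightarrow> Imp \<phi> \<psi> \<in> \<Gamma> \<Longrightarrow> \<phi> \<in> \<Gamma> \<Longrightarrow> \<psi> \<in> \<Gamma>"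
  using derives_mp[OF derives_assm derives_assm] prime_theory_derives by blast

lemma prime_theory_prov_mp: "prime_theory \<Gamma> \<Longrightarrow> prov (Imp \<phi> \<psi>) \<Longrightarrow> \<phi> \<in> \<Gamma> \<Longrightarrow> \<psi> \<in> \<Gamma>"
  using prime_theory_mp prime_theory_prov by blast

lemma prime_theory_Bot: "prime_theory \<Gamma> \<Longrightarrow> Bot \<notin> \<Gamma>"
  unfolding prime_theory_def by blast

lemma prime_theory_And: "prime_theory \<Gamma> \<Longrightarrow> And \<phi> \<psi> \<in> \<Gamma> \<longleftrightarrow> \<phi> \<in> \<Gamma> \<and> \<psi> \<in> \<Gamma>"
  using prime_theory_prov_mp[OF _ ax_conjE1] prime_theory_prov_mp[OF _ ax_conjE2]
    prime_theory_mp[OF _ prime_theory_prov_mp[OF _ ax_conjI]] by blast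

lemma prime_theory_Or: "prime_theory \<Gamma> \<Longrightarrow> Or \<phi> \<psi> \<in> \<Gamma> \<longleftrightarrow> \<phi> \<in> \<Gamma> \<or> \<psi> \<in> \<Gamma>"
  using prime_theory_prov_mp[OF _ ax_disjI1] prime_theory_prov_mp[OF _ ax_disjI2]
  unfolding prime_theory_def by blast

lemma prime_theory_Imp_notin_iff:
  assumes "prime_theory \<Gamma>"
  shows "Imp \<phi> \<psi> \<notin> \<Gamma> \<longleftrightarrow> (\<exists>\<Delta>. \<Gamma> \<subseteq> \<Delta> \<and> prime_theory \<Delta> \<and> \<phi> \<in> \<Delta> \<and> \<psi> \<notin> \<Delta>)"
proof
  assume "Imp \<phi> \<psi> \<notin> \<Gamma>"
  then have "\<not> derives (insert \<phi> \<Gamma>) \<psi>"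
    using prime_theory_derives[OF assms derives_deduction[of \<phi> \<Gamma> \<psi>]] by blast
  then show "\<exists>\<Delta>. \<Gamma> \<subseteq> \<Delta> \<and> prime_theory \<Delta> \<and> \<phi> \<in> \<Delta> \<and> \<psi> \<notin> \<Delta>"
    using lindenbaum[of "insert \<phi> \<Gamma>" \<psi>] by blast
qed (use prime_theory_mp in blast)

lemma prime_theory_omitting:
  assumes "\<not> prov \<phi>"
  obtains \<Gamma> where "prime_theory \<Gamma>" "\<phi> \<notin> \<Gamma>"
  using assms derives_empty lindenbaum[of "{}" \<phi>] by blast

lemma prov_Imp_if_prime_theory:
  assumes "\<And>\<Gamma>. prime_theory \<Gamma> \<Longrightarrow> \<phi> \<in> \<Gamma> \<Longrightarrow> \<psi> \<in> \<Gamma>"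
  shows "prov (Imp \<phi> \<psi>)"
proof (rule ccontr)
  assume "\<not> prov (Imp \<phi> \<psi>)"
  then have "\<not> derives {\<phi>} \<psi>"
    using derives_empty[OF derives_deduction] by blast
  then show False
    using assms lindenbaum[of "{\<phi>}" \<psi>] by blast
qed

lemma prov_Imp_trans: "prov (Imp \<phi> \<psi>) \<Longrightarrow> prov (Imp \<psi> \<chi>) \<Longrightarrow> prov (Imp \<phi> \<chi>)"
  by (rule prov_Imp_if_prime_theory) (blast intro: prime_theory_prov_mp)

definition next_theory :: "fm set \<Rightarrow> fm set" where
  "next_theory \<Gamma> = {\<phi>. Next \<phi> \<in> \<Gamma>}"

lemma next_theory_mono: "\<Gamma> \<subseteq> \<Delta> \<Longrightarrow> next_theory \<Gamma> \<subseteq> next_theory \<Delta>"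
  unfolding next_theory_def by auto

lemma prime_theory_next_theory:
  assumes "prime_theory \<Gamma>"
  shows "prime_theory (next_theory \<Gamma>)"
proof -
  have "Next \<phi> \<in> \<Gamma>" if "derives (next_theory \<Gamma>) \<phi>" for \<phi>
    using that
  proof (induction "next_theory \<Gamma>" \<phi> rule: derives.induct)
    case (derives_assm \<phi>)
    then show ?case by (simp add: next_theory_def)
  next
    case (derives_prov \<phi>)
    then show ?case using assms nec prime_theory_prov by blast
  next
    case (derives_mp \<phi> \<psi>)
    then show ?case using assms ax_next_K prime_theory_mp prime_theory_prov_mp by blast
  qed
  moreover have "Next Bot \<notin> \<Gamma>"
    using assms ax_next_bot prime_theory_Bot prime_theory_prov_mp unfolding Neg_def by blast
  moreover have "Next \<phi> \<in> \<Gamma> \<or> Next \<psi> \<in> \<Gamma>" if "Next (Or \<phi> \<psi>) \<in> \<Gamma>" for \<phi> \<psi>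
    using that assms ax_next_or prime_theory_prov_mp prime_theory_Or by blast
  ultimately show ?thesis
    unfolding prime_theory_def next_theory_def by auto
qed

text \<open>The converse of \<open>ax_diam_fix\<close>, by the induction rule for \<open>Or \<phi> (Next (Diam \<phi>))\<close>.\<close>

lemma prov_Diam_unfold: "prov (Imp (Diam \<phi>) (Or \<phi> (Next (Diam \<phi>))))"
proof -
  let ?\<chi> = "Or \<phi> (Next (Diam \<phi>))"
  have "prov (Imp \<phi> (Diam \<phi>))" "prov (Imp (Next (Diam \<phi>)) (Diam \<phi>))"
    using prov_Imp_trans[OF ax_disjI1 ax_diam_fix] prov_Imp_trans[OF ax_disjI2 ax_diam_fix] .
  then have next_\<phi>: "prov (Imp (Next \<phi>) (Next (Diam \<phi>)))"
    and next_next: "prov (Imp (Next (Next (Diam \<phi>))) (Next (Diam \<phi>)))"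
    using ax_next_K nec prov.mp by blast+
  have "prov (Imp (Next ?\<chi>) ?\<chi>)"
  proof (rule prov_Imp_if_prime_theory)
    fix \<Gamma> assume \<Gamma>: "prime_theory \<Gamma>" "Next ?\<chi> \<in> \<Gamma>"
    then have "Next \<phi> \<in> \<Gamma> \<or> Next (Next (Diam \<phi>)) \<in> \<Gamma>"
      using ax_next_or prime_theory_prov_mp prime_theory_Or by blast
    then show "?\<chi> \<in> \<Gamma>"
      using \<Gamma> next_\<phi> next_next prime_theory_prov_mp prime_theory_Or by blast
  qed
  then have "prov (Imp (Diam ?\<chi>) ?\<chi>)"
    by (rule ind)
  moreover have "prov (Imp (Diam \<phi>) (Diam ?\<chi>))"
    by (rule diam_mono, rule ax_disjI1)
  ultimately show ?thesis
    using prov_Imp_trans by blast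
qed

lemma prime_theory_Diam:
  "prime_theory \<Gamma> \<Longrightarrow> Diam \<phi> \<in> \<Gamma> \<longleftrightarrow> \<phi> \<in> \<Gamma> \<or> Diam \<phi> \<in> next_theory \<Gamma>"
  unfolding next_theory_def
  using prime_theory_prov_mp[OF _ ax_diam_fix] prime_theory_prov_mp[OF _ prov_Diam_unfold]
    prime_theory_Or by blast

definition Verum :: fm where
  "Verum = Imp Bot Bot"

definition Conj :: "fm set \<Rightarrow> fm" where
  "Conj A = foldr And (SOME xs. set xs = A) Verum"

definition Disj :: "fm set \<Rightarrow> fm" where
  "Disj A = foldr Or (SOME xs. set xs = A) Bot"

lemma prime_theory_Conj:
  assumes "prime_theory \<Gamma>" "finite A"
  shows "Conj A \<in> \<Gamma> \<longleftrightarrow> A \<subseteq> \<Gamma>"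
proof -
  have "Verum \<in> \<Gamma>"
    unfolding Verum_def using assms(1) prime_theory_prov prov_Imp_refl by blast
  then have "foldr And xs Verum \<in> \<Gamma> \<longleftrightarrow> set xs \<subseteq> \<Gamma>" for xs
    by (induction xs) (auto simp: prime_theory_And[OF assms(1)])
  then show ?thesis
    unfolding Conj_def using someI_ex[OF finite_list[OF assms(2)]] by presburger
qed

lemma prime_theory_Disj:
  assumes "prime_theory \<Gamma>" "finite A"
  shows "Disj A \<in> \<Gamma> \<longleftrightarrow> A \<inter> \<Gamma> \<noteq> {}"
proof -
  have "foldr Or xs Bot \<in> \<Gamma> \<longleftrightarrow> set xs \<inter> \<Gamma> \<noteq> {}" for xs
    by (induction xs) (auto simp: prime_theory_Or[OF assms(1)] prime_theory_Bot[OF assms(1)])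
  then show ?thesis
    unfolding Disj_def using someI_ex[OF finite_list[OF assms(2)]] by presburger
qed

section \<open>Fair paths\<close>

lemma successively_append_tl:
  assumes "successively P p" "successively P q" "p \<noteq> []" "hd q = last p"
  shows "successively P (p @ tl q)"
  using assms by (cases q) (auto simp: successively_append_iff successively_Cons neq_Nil_conv)

locale eventualities =
  fixes W :: "'w set" and R :: "'w \<Rightarrow> 'w \<Rightarrow> bool"
    and req :: "'w \<Rightarrow> 'r set" and ful :: "'r \<Rightarrow> 'w \<Rightarrow> bool"
  assumes persist: "v \<in> W \<Longrightarrow> R v v' \<Longrightarrow> r \<in> req v \<Longrightarrow> ful r v \<or> r \<in> req v'"
begin

definition fair_paths :: "(nat \<Rightarrow> 'w) set" where
  "fair_paths = {x. (\<forall>i. x i \<in> W \<and> R (x i) (x (Suc i))) \<and> (\<forall>i. \<forall>r\<in>req (x i). \<exists>j\<ge>i. ful r (x j))}"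

lemma fair_pathsD:
  assumes "x \<in> fair_paths"
  shows "x i \<in> W" "R (x i) (x (Suc i))" "r \<in> req (x i) \<Longrightarrow> \<exists>j\<ge>i. ful r (x j)"
  using assms unfolding fair_paths_def by blast+

lemma fair_paths_shift:
  assumes "x \<in> fair_paths"
  shows "(\<lambda>i. x (Suc i)) \<in> fair_paths"
proof -
  have "\<exists>j\<ge>i. ful r (x (Suc j))" if "r \<in> req (x (Suc i))" for i r
    using fair_pathsD(3)[OF assms that] by (metis Suc_le_D Suc_le_mono)
  then show ?thesis
    using fair_pathsD(1,2)[OF assms] unfolding fair_paths_def by blast
qed

lemma fulfilled_before:
  assumes path: "\<And>i. x i \<in> W \<and> R (x i) (x (Suc i))"
    and fair_at_n: "\<And>r. r \<in> req (x n) \<Longrightarrow> \<exists>j\<ge>n. ful r (x j)"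
    and "i \<le> n" "r \<in> req (x i)"
  shows "\<exists>j\<ge>i. ful r (x j)"
  using assms(3,4)
proof (induction i rule: inc_induct)
  case (step i)
  then show ?case
    using persist path by (meson Suc_leD le_refl)
qed (use fair_at_n in blast)

lemma fair_paths_prepend:
  assumes y: "\<And>i. i < n \<Longrightarrow> y i \<in> W \<and> R (y i) (y (Suc i))"
    and z: "z \<in> fair_paths" "z 0 = y n"
  shows "(\<lambda>i. if i \<le> n then y i else z (i - n)) \<in> fair_paths" (is "?x \<in> _")
proof -
  have shifted: "?x (n + j) = z j" for j
    using z(2) by auto
  have path: "?x i \<in> W \<and> R (?x i) (?x (Suc i))" for i
  proof (cases "i < n")
    case True
    then show ?thesis using y by auto
  next
    case False
    then obtain j where "i = n + j"
      using le_Suc_ex by (meson not_less)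
    then have "?x i = z j" "?x (Suc i) = z (Suc j)"
      using shifted[of j] shifted[of "Suc j"] z(2) by simp_all
    then show ?thesis
      using fair_pathsD(1,2)[OF z(1), of j] by simp
  qed
  have fair_beyond: "\<exists>j\<ge>i. ful r (?x j)" if ni: "n \<le> i" and ri: "r \<in> req (?x i)" for i r
  proof -
    obtain k where i: "i = n + k"
      using le_Suc_ex[OF ni] by blast
    have "r \<in> req (z k)"
      using ri unfolding i shifted .
    then obtain j where "j \<ge> k" "ful r (z j)"
      using fair_pathsD(3)[OF z(1)] by blast
    then have "n + j \<ge> i" "ful r (?x (n + j))"
      unfolding i shifted by simp_all
    then show ?thesis
      by blast
  qed
  have "\<exists>j\<ge>i. ful r (?x j)" if "r \<in> req (?x i)" for i r
  proof (cases "i \<le> n")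
    case True
    then show ?thesis
      using fulfilled_before[OF path fair_beyond] that by blast
  qed (use fair_beyond that in auto)
  then show ?thesis
    unfolding fair_paths_def using path by blast
qed

lemma req_persists_along:
  "successively R p \<Longrightarrow> set p \<subseteq> W \<Longrightarrow> p \<noteq> [] \<Longrightarrow> r \<in> req (hd p) \<Longrightarrow>
    (\<exists>v\<in>set p. ful r v) \<or> r \<in> req (last p)"
proof (induction p rule: induct_list012)
  case (3 v v' p)
  then show ?case
    using persist[of v v' r] by auto
qed auto

inductive reaches :: "'r \<Rightarrow> 'w \<Rightarrow> bool" for r where
  reaches_here: "w \<in> W \<Longrightarrow> ful r w \<Longrightarrow> reaches r w"
| reaches_step: "w \<in> W \<Longrightarrow> w' \<in> W \<Longrightarrow> R w w' \<Longrightarrow> reaches r w' \<Longrightarrow> reaches r w"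

lemma reaches_path:
  "reaches r w \<Longrightarrow> \<exists>p. p \<noteq> [] \<and> hd p = w \<and> successively R p \<and> set p \<subseteq> W \<and> ful r (last p)"
proof (induction rule: reaches.induct)
  case (reaches_here w)
  then show ?case
    by (intro exI[of _ "[w]"]) auto
next
  case (reaches_step w w')
  then obtain p where "p \<noteq> []" "hd p = w'" "successively R p" "set p \<subseteq> W" "ful r (last p)"
    by blast
  then show ?case
    using reaches_step.hyps by (intro exI[of _ "w # p"]) (auto simp: successively_Cons neq_Nil_conv)
qed

definition fulfilling_block :: "'w \<Rightarrow> 'w list \<Rightarrow> bool" where
  "fulfilling_block w p \<longleftrightarrow> 2 \<le> length p \<and> hd p = w \<and> successively R p \<and> set p \<subseteq> W \<and>
     (\<forall>r\<in>req w. \<exists>v\<in>set p. ful r v)"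

lemma fulfilling_block_exists:
  assumes serial: "\<And>v. v \<in> W \<Longrightarrow> \<exists>v'\<in>W. R v v'"
    and reach: "\<And>v r. v \<in> W \<Longrightarrow> r \<in> req v \<Longrightarrow> reaches r v"
    and "finite (req w)" "w \<in> W"
  shows "\<exists>p. fulfilling_block w p"
proof -
  have "\<exists>p. 2 \<le> length p \<and> hd p = w \<and> successively R p \<and> set p \<subseteq> W \<and> (\<forall>r\<in>F. \<exists>v\<in>set p. ful r v)"
    if "finite F" "F \<subseteq> req w" for F
    using that
  proof (induction F rule: finite_induct)
    case empty
    obtain w' where "w' \<in> W" "R w w'"
      using serial \<open>w \<in> W\<close> by blast
    then show ?case
      using \<open>w \<in> W\<close> by (intro exI[of _ "[w, w']"]) auto
  next
    case (insert r F)
    then obtain p where p: "2 \<le> length p" "hd p = w" "successively R p" "set p \<subseteq> W"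
      "\<forall>r\<in>F. \<exists>v\<in>set p. ful r v"
      by blast
    show ?case
    proof (cases "\<exists>v\<in>set p. ful r v")
      case True
      then show ?thesis using p by auto
    next
      case False
      have "p \<noteq> []"
        using p(1) by auto
      then have "r \<in> req (last p)" "last p \<in> W"
        using req_persists_along[OF p(3,4)] False insert.prems p(2,4) by auto
      then obtain q where q: "q \<noteq> []" "hd q = last p" "successively R q" "set q \<subseteq> W"
        "ful r (last q)"
        using reach reaches_path by blast
      have "last q \<in> set (p @ tl q)"
        using q(1,2) \<open>p \<noteq> []\<close> by (cases q) auto
      then show ?thesis
        using p q \<open>p \<noteq> []\<close> successively_append_tl[OF p(3) q(3) \<open>p \<noteq> []\<close> q(2)]
        by (intro exI[of _ "p @ tl q"]) (auto dest: list.set_sel(2))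
    qed
  qed
  then show ?thesis
    unfolding fulfilling_block_def using assms(3) by blast
qed

end

text \<open>\<open>block_stage B w n\<close> is the part of the current block not yet passed at step \<open>n\<close> of the
  path that starts with the block \<open>B w\<close> and, whenever only the last point of a block is left,
  continues with the block of that point.\<close>

primrec block_stage :: "('w \<Rightarrow> 'w list) \<Rightarrow> 'w \<Rightarrow> nat \<Rightarrow> 'w list" where
  "block_stage B w 0 = B w"
| "block_stage B w (Suc n) =
    (if 2 < length (block_stage B w n) then tl (block_stage B w n) else B (last (block_stage B w n)))"

context eventualities
begin

context
  fixes B :: "'w \<Rightarrow> 'w list" and w :: 'w
  assumes blocks: "\<And>v. v \<in> W \<Longrightarrow> fulfilling_block v (B v)" and w: "w \<in> W"
begin

lemma block_stage_invariant:
  "2 \<le> length (block_stage B w n) \<and> successively R (block_stage B w n) \<and> set (block_stage B w n) \<subseteq> W"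
proof (induction n)
  case 0
  then show ?case
    using blocks[OF w] unfolding fulfilling_block_def by simp
next
  case (Suc n)
  let ?p = "block_stage B w n"
  show ?case
  proof (cases "2 < length ?p")
    case True
    then show ?thesis
      using Suc by (cases ?p) (auto simp: successively_Cons)
  next
    case False
    have "last ?p \<in> W"
      using Suc by (metis last_in_set list.size(3) not_numeral_le_zero subsetD)
    then show ?thesis
      using False blocks unfolding fulfilling_block_def by simp
  qed
qed

lemma block_stage_add:
  "k + 2 \<le> length (block_stage B w n) \<Longrightarrow> block_stage B w (n + k) = drop k (block_stage B w n)"
proof (induction k)
  case (Suc k)
  then have "block_stage B w (n + k) = drop k (block_stage B w n)"
    by simp
  moreover have "2 < length (drop k (block_stage B w n))"
    using Suc.prems by simp
  ultimately show ?case
    by (simp add: drop_Suc tl_drop)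
qed simp

lemma block_stage_next_block:
  "block_stage B w (n + (length (block_stage B w n) - 1)) = B (last (block_stage B w n))"
proof -
  let ?p = "block_stage B w n" and ?m = "length (block_stage B w n)"
  have m: "2 \<le> ?m"
    using block_stage_invariant by blast
  then have "block_stage B w (n + (?m - 2)) = drop (?m - 2) ?p"
    using block_stage_add[of "?m - 2" n] by simp
  moreover have "n + (?m - 1) = Suc (n + (?m - 2))"
    using m by simp
  ultimately show ?thesis
    using m by (simp add: last_drop)
qed

lemma hd_block_stage_add:
  assumes "k < length (block_stage B w n)"
  shows "hd (block_stage B w (n + k)) = block_stage B w n ! k"
proof (cases "k + 2 \<le> length (block_stage B w n)")
  case True
  then show ?thesis
    by (simp add: block_stage_add hd_drop_conv_nth)
next
  case False
  let ?p = "block_stage B w n"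
  have k: "k = length ?p - 1" and "?p \<noteq> []"
    using False assms by auto
  moreover have "last ?p \<in> W"
    using block_stage_invariant \<open>?p \<noteq> []\<close> by (meson last_in_set subsetD)
  ultimately show ?thesis
    using block_stage_next_block[of n] blocks unfolding fulfilling_block_def
    by (simp add: last_conv_nth)
qed

lemma block_path_step:
  "hd (block_stage B w n) \<in> W \<and> R (hd (block_stage B w n)) (hd (block_stage B w (Suc n)))"
proof -
  let ?p = "block_stage B w n"
  have p: "2 \<le> length ?p" "successively R ?p" "set ?p \<subseteq> W"
    using block_stage_invariant by blast+
  have x0: "hd ?p = ?p ! 0"
    using p(1) by (cases ?p) auto
  have x1: "hd (block_stage B w (Suc n)) = ?p ! 1"
    using hd_block_stage_add[of 1 n] p(1) by simp
  have "?p ! 0 \<in> W"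
    using p(1,3) by (cases ?p) auto
  moreover have "R (?p ! 0) (?p ! 1)"
    using successively_nth[OF p(2), of 0] p(1) by simp
  ultimately show ?thesis
    unfolding x0 x1 by blast
qed

lemma block_start_fulfilled:
  assumes r: "r \<in> req (hd (block_stage B w (n + (length (block_stage B w n) - 1))))"
  shows "\<exists>j\<ge>n + (length (block_stage B w n) - 1). ful r (hd (block_stage B w j))"
proof -
  let ?p = "block_stage B w n"
  define N where "N = n + (length ?p - 1)"
  have "last ?p \<in> W"
    using block_stage_invariant by (metis last_in_set list.size(3) not_numeral_le_zero subsetD)
  then have block: "fulfilling_block (last ?p) (block_stage B w N)"
    unfolding N_def block_stage_next_block using blocks by simp
  then have "hd (block_stage B w N) = last ?p"
    unfolding fulfilling_block_def by simp
  then have "\<exists>v\<in>set (block_stage B w N). ful r v"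
    using block r unfolding N_def fulfilling_block_def by simp
  then obtain k where "k < length (block_stage B w N)" "ful r (block_stage B w N ! k)"
    by (auto simp: in_set_conv_nth)
  then have "ful r (hd (block_stage B w (N + k)))"
    using hd_block_stage_add[of k N] by simp
  then show ?thesis
    unfolding N_def by (intro exI[of _ "N + k"]) (simp add: N_def)
qed

lemma block_path_fair: "(\<lambda>n. hd (block_stage B w n)) \<in> fair_paths"
proof -
  have "\<exists>j\<ge>n. ful r (hd (block_stage B w j))" if r: "r \<in> req (hd (block_stage B w n))" for n r
    using block_start_fulfilled[where n = n]
    by (rule fulfilled_before[where x = "\<lambda>n. hd (block_stage B w n)", OF block_path_step])
      (simp_all add: r)
  then show ?thesis
    unfolding fair_paths_def using block_path_step by blast
qed

end

lemma fair_path_exists: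
  assumes serial: "\<And>v. v \<in> W \<Longrightarrow> \<exists>v'\<in>W. R v v'"
    and reach: "\<And>v r. v \<in> W \<Longrightarrow> r \<in> req v \<Longrightarrow> reaches r v"
    and finite_req: "\<And>v. v \<in> W \<Longrightarrow> finite (req v)"
    and "w \<in> W"
  shows "\<exists>x\<in>fair_paths. x 0 = w"
proof -
  define B where "B v = (SOME p. fulfilling_block v p)" for v
  have blocks: "fulfilling_block v (B v)" if "v \<in> W" for v
    unfolding B_def using fulfilling_block_exists[OF serial reach finite_req[OF that] that] by (rule someI_ex)
  have "(\<lambda>n. hd (block_stage B w n)) \<in> fair_paths"
    by (rule block_path_fair) (use blocks \<open>w \<in> W\<close> in auto)
  moreover have "hd (block_stage B w 0) = w"
    using blocks \<open>w \<in> W\<close> unfolding fulfilling_block_def by simp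
  ultimately show ?thesis
    by (intro bexI[of _ "\<lambda>n. hd (block_stage B w n)"]) simp_all
qed

end

section \<open>Transport of models along injections\<close>

lemma sem_subset_topspace:
  assumes "\<And>p. V p \<subseteq> topspace T"
  shows "sem T f V \<phi> \<subseteq> topspace T"
proof (induction \<phi>)
  case (Imp \<phi> \<psi>)
  then show ?case
    using interior_of_subset_topspace by simp
qed (use assms in auto)

lemma homeomorphic_map_pullback_inv_into:
  assumes inj: "inj_on h (topspace T)"
  shows "homeomorphic_map T (pullback_topology (h ` topspace T) (inv_into (topspace T) h) T) h"
proof -
  let ?g = "inv_into (topspace T) h"
  let ?T' = "pullback_topology (h ` topspace T) ?g T"
  have "continuous_map T T (?g \<circ> h)"
    using continuous_map_id by (rule continuous_map_eq) (simp add: inv_into_f_f[OF inj])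
  then have "continuous_map T ?T' h"
    by (rule continuous_map_pullback') auto
  moreover have "continuous_map ?T' T ?g"
    using continuous_map_pullback[OF continuous_map_id, of "h ` topspace T" ?g] by simp
  moreover have "\<forall>y\<in>topspace ?T'. h (?g y) = y"
    by (auto simp: topspace_pullback_topology f_inv_into_f)
  ultimately have "homeomorphic_maps T ?T' h ?g"
    unfolding homeomorphic_maps_def by (simp add: inv_into_f_f[OF inj])
  then show ?thesis
    by (rule homeomorphic_maps_imp_map)
qed

lemma conjugate_preimage_image:
  assumes "homeomorphic_maps T T' h g" "F \<in> topspace T \<rightarrow> topspace T" "A \<subseteq> topspace T"
    and "\<And>x. x \<in> topspace T \<Longrightarrow> F' (h x) = h (F x)"
  shows "{y \<in> topspace T'. F' y \<in> h ` A} = h ` {x \<in> topspace T. F x \<in> A}"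
proof -
  have "inj_on h (topspace T)" "h ` topspace T = topspace T'"
    using assms(1) homeomorphic_maps_imp_map homeomorphic_imp_injective_map
      homeomorphic_imp_surjective_map by blast+
  show ?thesis
  proof (intro equalityI subsetI)
    fix y assume y: "y \<in> {y \<in> topspace T'. F' y \<in> h ` A}"
    then obtain x where x: "x \<in> topspace T" "y = h x"
      using \<open>h ` topspace T = topspace T'\<close> by auto
    then have "h (F x) \<in> h ` A"
      using y assms(4) by simp
    then have "F x \<in> A"
      using x assms(2,3) \<open>inj_on h (topspace T)\<close> by (simp add: Pi_iff inj_on_image_mem_iff)
    then show "y \<in> h ` {x \<in> topspace T. F x \<in> A}"
      using x by blast
  qed (use \<open>h ` topspace T = topspace T'\<close> assms(4) in auto)
qed

lemma sem_homeomorphic_image: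
  assumes hom: "homeomorphic_maps T T' h g" and f: "continuous_map T T f"
    and V: "\<And>p. V p \<subseteq> topspace T"
  shows "sem T' (\<lambda>y. h (f (g y))) (\<lambda>p. h ` V p) \<phi> = h ` sem T f V \<phi>"
proof -
  have hmap: "homeomorphic_map T T' h"
    using hom homeomorphic_maps_imp_map by blast
  have inj: "inj_on h (topspace T)" and onto: "h ` topspace T = topspace T'"
    using hmap homeomorphic_imp_injective_map homeomorphic_imp_surjective_map by blast+
  have gh: "g (h x) = x" if "x \<in> topspace T" for x
    using hom that unfolding homeomorphic_maps_def by blast
  have fT: "f \<in> topspace T \<rightarrow> topspace T"
    using f continuous_map_funspace by blast
  have iterate: "((\<lambda>y. h (f (g y))) ^^ n) (h x) = h ((f ^^ n) x) \<and> (f ^^ n) x \<in> topspace T"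
    if "x \<in> topspace T" for x n
    using that fT by (induction n) (auto simp: gh)
  have sub: "sem T f V \<psi> \<subseteq> topspace T" for \<psi>
    using V by (rule sem_subset_topspace)
  show ?thesis
  proof (induction \<phi>)
    case (And \<phi> \<psi>)
    then show ?case
      using inj_on_image_Int[OF inj sub sub] by simp
  next
    case (Imp \<phi> \<psi>)
    have "topspace T' - h ` sem T f V \<phi> \<union> h ` sem T f V \<psi> =
        h ` (topspace T - sem T f V \<phi> \<union> sem T f V \<psi>)"
      using inj_on_image_set_diff[OF inj _ sub] onto by (simp add: image_Un)
    then show ?case
      using Imp homeomorphic_map_interior_of[OF hmap] sub by (simp add: Un_least)
  next
    case (Next \<phi>)
    then show ?case
      using conjugate_preimage_image[OF hom fT sub] gh by simp
  next
    case (Diam \<phi>)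
    have "{y \<in> topspace T'. ((\<lambda>y. h (f (g y))) ^^ n) y \<in> h ` sem T f V \<phi>} =
        h ` {x \<in> topspace T. (f ^^ n) x \<in> sem T f V \<phi>}" for n
      by (rule conjugate_preimage_image[OF hom _ sub]) (use iterate in auto)
    then show ?case
      using Diam by (simp add: image_UN)
  qed (simp_all add: image_Un)
qed

lemma valid_over_sem_eq_topspace:
  fixes T :: "'b topology" and h :: "'b \<Rightarrow> 'a"
  assumes valid: "valid_over TYPE('a) \<phi>" and dyn: "dynamical_system T f"
    and V: "\<And>p. openin T (V p)" and inj: "inj_on h (topspace T)"
  shows "sem T f V \<phi> = topspace T"
proof -
  obtain T' :: "'a topology" and g where hom: "homeomorphic_maps T T' h g"
    using homeomorphic_map_pullback_inv_into[OF inj] homeomorphic_map_maps by blast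
  then have hmap: "homeomorphic_map T T' h"
    by (rule homeomorphic_maps_imp_map)
  have f: "continuous_map T T f"
    using dyn unfolding dynamical_system_def .
  have "continuous_map T' T g" "continuous_map T T' h"
    using hom unfolding homeomorphic_maps_def by blast+
  then have "continuous_map T' T' (h \<circ> (f \<circ> g))"
    using continuous_map_compose f by metis
  then have "continuous_map T' T' (\<lambda>y. h (f (g y)))"
    by (simp add: comp_def)
  moreover have "openin T' (h ` V p)" for p
    by (simp add: homeomorphic_map_openness[OF hmap openin_subset[OF V]] V)
  ultimately have "sem T' (\<lambda>y. h (f (g y))) (\<lambda>p. h ` V p) \<phi> = topspace T'"
    by (rule valid[unfolded valid_over_def dynamical_system_def, rule_format])
  then have "h ` sem T f V \<phi> = h ` topspace T"
    using sem_homeomorphic_image[OF hom f openin_subset[OF V]]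
      homeomorphic_imp_surjective_map[OF hmap] by simp
  then show ?thesis
    using inj_on_image_eq_iff[OF inj sem_subset_topspace[OF openin_subset[OF V]] subset_refl]
    by simp
qed

lemma inj_on_paths_into_nat_sets:
  assumes "countable W"
  shows "\<exists>e :: (nat \<Rightarrow> 'w) \<Rightarrow> nat set. inj_on e {x. \<forall>i. x i \<in> W}"
proof -
  obtain idx :: "'w \<Rightarrow> nat" where idx: "inj_on idx W"
    using assms unfolding countable_def by blast
  have "inj_on (\<lambda>x. range (\<lambda>i. prod_encode (i, idx (x i)))) {x. \<forall>i. x i \<in> W}"
  proof (rule inj_onI)
    fix x y assume x: "x \<in> {x. \<forall>i. x i \<in> W}" and y: "y \<in> {x. \<forall>i. x i \<in> W}"
      and eq: "range (\<lambda>i. prod_encode (i, idx (x i))) = range (\<lambda>i. prod_encode (i, idx (y i)))"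
    have "x i = y i" for i
    proof -
      have "prod_encode (i, idx (x i)) \<in> range (\<lambda>i. prod_encode (i, idx (y i)))"
        unfolding eq[symmetric] by (rule rangeI)
      then obtain j where "prod_encode (i, idx (x i)) = prod_encode (j, idx (y j))"
        by (rule rangeE)
      then have "idx (x i) = idx (y i)"
        by (auto simp: prod_encode_eq)
      then show ?thesis
        using idx x y unfolding inj_on_def by simp
    qed
    then show "x = y"
      by blast
  qed
  then show ?thesis
    by blast
qed

lemma inj_on_singleton_comp:
  assumes "inj g" "inj_on e A"
  shows "inj_on (\<lambda>x. g {e x}) A"
proof (rule inj_onI)
  fix x y assume "x \<in> A" "y \<in> A" "g {e x} = g {e y}"
  then show "x = y"
    using assms by (metis inj_onD injD singleton_inject)
qed

section \<open>Moments\<close>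

datatype moment = Moment (label: "fm set") (children: "moment list")

primrec subtrees :: "moment \<Rightarrow> moment set" where
  "subtrees (Moment t cs) = insert (Moment t cs) (\<Union> (set (map subtrees cs)))"

lemma subtrees_self [simp]: "w \<in> subtrees w"
  by (cases w) auto

lemma subtrees_trans: "v \<in> subtrees w \<Longrightarrow> subtrees v \<subseteq> subtrees w"
  by (induction w) auto

lemma Ball_subtrees_Moment:
  "(\<forall>v\<in>subtrees (Moment t cs). P v) \<longleftrightarrow> P (Moment t cs) \<and> (\<forall>c\<in>set cs. \<forall>v\<in>subtrees c. P v)"
  by auto

lemma finite_subtrees: "finite (subtrees w)"
  by (induction w) auto

lemma subtrees_child: "c \<in> set cs \<Longrightarrow> subtrees c \<subseteq> subtrees (Moment t cs)"
  by auto

lemma child_in_subtrees: "c \<in> set cs \<Longrightarrow> c \<in> subtrees (Moment t cs)"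
  using subtrees_child subtrees_self by blast

locale subformula_closed =
  fixes S :: "fm set"
  assumes finite_S: "finite S"
    and And_closed: "And \<phi> \<psi> \<in> S \<Longrightarrow> \<phi> \<in> S \<and> \<psi> \<in> S"
    and Or_closed: "Or \<phi> \<psi> \<in> S \<Longrightarrow> \<phi> \<in> S \<and> \<psi> \<in> S"
    and Imp_closed: "Imp \<phi> \<psi> \<in> S \<Longrightarrow> \<phi> \<in> S \<and> \<psi> \<in> S"
    and Next_closed: "Next \<phi> \<in> S \<Longrightarrow> \<phi> \<in> S"
    and Diam_closed: "Diam \<phi> \<in> S \<Longrightarrow> \<phi> \<in> S"
begin

definition sensible :: "fm set \<Rightarrow> fm set \<Rightarrow> bool" where
  "sensible t s \<longleftrightarrow> (\<forall>\<phi>. Next \<phi> \<in> S \<longrightarrow> (Next \<phi> \<in> t \<longleftrightarrow> \<phi> \<in> s)) \<and>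
     (\<forall>\<phi>. Diam \<phi> \<in> S \<longrightarrow> (Diam \<phi> \<in> t \<longleftrightarrow> \<phi> \<in> t \<or> Diam \<phi> \<in> s))"

lemma sensible_next_theory:
  assumes "prime_theory \<Gamma>"
  shows "sensible (\<Gamma> \<inter> S) (next_theory \<Gamma> \<inter> S)"
proof -
  have "Next \<phi> \<in> \<Gamma> \<longleftrightarrow> \<phi> \<in> next_theory \<Gamma>" for \<phi>
    by (simp add: next_theory_def)
  moreover have "Diam \<phi> \<in> \<Gamma> \<longleftrightarrow> \<phi> \<in> \<Gamma> \<or> Diam \<phi> \<in> next_theory \<Gamma>" for \<phi>
    using prime_theory_Diam[OF assms] .
  ultimately show ?thesis
    unfolding sensible_def using Next_closed Diam_closed by blast
qed

fun moment_succ :: "moment \<Rightarrow> moment \<Rightarrow> bool" where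
  "moment_succ (Moment t cs) w' \<longleftrightarrow>
     sensible t (label w') \<and> (\<forall>c\<in>set cs. \<exists>d\<in>subtrees w'. moment_succ c d)"

fun realizes :: "fm set \<Rightarrow> moment \<Rightarrow> bool" where
  "realizes \<Gamma> (Moment t cs) \<longleftrightarrow>
     prime_theory \<Gamma> \<and> \<Gamma> \<inter> S = t \<and> (\<forall>c\<in>set cs. \<exists>\<Delta>. \<Gamma> \<subseteq> \<Delta> \<and> realizes \<Delta> c)"

fun realizes_succ :: "fm set \<Rightarrow> moment \<Rightarrow> bool" where
  "realizes_succ \<Gamma> (Moment t cs) \<longleftrightarrow>
     prime_theory \<Gamma> \<and> sensible t (\<Gamma> \<inter> S) \<and> (\<forall>c\<in>set cs. \<exists>\<Delta>. \<Gamma> \<subseteq> \<Delta> \<and> realizes_succ \<Delta> c)"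

definition well_formed :: "moment \<Rightarrow> bool" where
  "well_formed w \<longleftrightarrow> (\<forall>v\<in>subtrees w. label v \<subseteq> S \<and> distinct (children v) \<and>
     (\<forall>c\<in>set (children v). label v \<subset> label c))"

definition imp_witnessed :: "moment \<Rightarrow> bool" where
  "imp_witnessed w \<longleftrightarrow> (\<forall>v\<in>subtrees w. \<forall>\<phi> \<psi>. Imp \<phi> \<psi> \<in> S \<longrightarrow> Imp \<phi> \<psi> \<notin> label v \<longrightarrow>
     (\<exists>u\<in>subtrees v. \<phi> \<in> label u \<and> \<psi> \<notin> label u))"

definition moments :: "moment set" where
  "moments = {w. well_formed w \<and> imp_witnessed w \<and> (\<exists>\<Gamma>. realizes \<Gamma> w)}"

lemma well_formed_Moment_iff:
  "well_formed (Moment t cs) \<longleftrightarrow> t \<subseteq> S \<and> distinct cs \<and> (\<forall>c\<in>set cs. t \<subset> label c \<and> well_formed c)"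
  unfolding well_formed_def Ball_subtrees_Moment by (simp del: subtrees.simps) blast

lemma imp_witnessed_Moment_iff:
  "imp_witnessed (Moment t cs) \<longleftrightarrow> (\<forall>c\<in>set cs. imp_witnessed c) \<and>
     (\<forall>\<phi> \<psi>. Imp \<phi> \<psi> \<in> S \<longrightarrow> Imp \<phi> \<psi> \<notin> t \<longrightarrow>
       (\<exists>u\<in>subtrees (Moment t cs). \<phi> \<in> label u \<and> \<psi> \<notin> label u))"
  unfolding imp_witnessed_def Ball_subtrees_Moment moment.sel by blast

lemma realizes_prime_theory: "realizes \<Gamma> w \<Longrightarrow> prime_theory \<Gamma>"
  by (cases w) auto

lemma realizes_label: "realizes \<Gamma> w \<Longrightarrow> label w = \<Gamma> \<inter> S"
  by (cases w) auto

lemma realizes_succ_prime_theory: "realizes_succ \<Gamma> w \<Longrightarrow> prime_theory \<Gamma>"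
  by (cases w) auto

lemma realizes_subtree: "realizes \<Gamma> w \<Longrightarrow> v \<in> subtrees w \<Longrightarrow> \<exists>\<Delta>. \<Gamma> \<subseteq> \<Delta> \<and> realizes \<Delta> v"
proof (induction w arbitrary: \<Gamma>)
  case (Moment t cs)
  show ?case
  proof (cases "v = Moment t cs")
    case False
    then obtain c where c: "c \<in> set cs" "v \<in> subtrees c"
      using Moment.prems(2) by auto
    moreover obtain \<Delta> where "\<Gamma> \<subseteq> \<Delta>" "realizes \<Delta> c"
      using Moment.prems(1) c(1) by auto
    ultimately obtain \<Delta>' where "\<Delta> \<subseteq> \<Delta>'" "realizes \<Delta>' v"
      using Moment.IH by blast
    then show ?thesis
      using \<open>\<Gamma> \<subseteq> \<Delta>\<close> by (intro exI[of _ \<Delta>']) auto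
  qed (use Moment.prems in blast)
qed

lemma moments_subtree:
  assumes w: "w \<in> moments" and v: "v \<in> subtrees w"
  shows "v \<in> moments"
proof -
  obtain \<Gamma> where "realizes \<Gamma> w"
    using w unfolding moments_def by blast
  then obtain \<Delta> where "realizes \<Delta> v"
    using realizes_subtree[OF _ v] by blast
  moreover have "subtrees v \<subseteq> subtrees w"
    using subtrees_trans[OF v] .
  ultimately show ?thesis
    using w unfolding moments_def well_formed_def imp_witnessed_def by blast
qed

lemma moments_label: "w \<in> moments \<Longrightarrow> \<exists>\<Gamma>. prime_theory \<Gamma> \<and> label w = \<Gamma> \<inter> S"
  unfolding moments_def using realizes_prime_theory realizes_label by blast

lemma moments_label_subset: "w \<in> moments \<Longrightarrow> label w \<subseteq> S"
  using moments_label by blast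

lemma moments_label_mono:
  assumes w: "w \<in> moments" and v: "v \<in> subtrees w"
  shows "label w \<subseteq> label v"
proof -
  obtain \<Gamma> where \<Gamma>: "realizes \<Gamma> w"
    using w unfolding moments_def by blast
  then obtain \<Delta> where "\<Gamma> \<subseteq> \<Delta>" "realizes \<Delta> v"
    using realizes_subtree[OF _ v] by blast
  then show ?thesis
    using realizes_label \<Gamma> by auto
qed

lemma moment_succ_sensible: "moment_succ w w' \<Longrightarrow> sensible (label w) (label w')"
  by (cases w) auto

lemma moment_succ_subtree: "moment_succ w w' \<Longrightarrow> v \<in> subtrees w \<Longrightarrow> \<exists>v'\<in>subtrees w'. moment_succ v v'"
proof (induction w arbitrary: w')
  case (Moment t cs)
  show ?case
  proof (cases "v = Moment t cs")
    case False
    then obtain c where "c \<in> set cs" "v \<in> subtrees c"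
      using Moment.prems(2) by auto
    moreover obtain d where "d \<in> subtrees w'" "moment_succ c d"
      using Moment.prems(1) calculation(1) by auto
    ultimately show ?thesis
      using Moment.IH subtrees_trans by blast
  qed (use Moment.prems subtrees_self in blast)
qed

lemma realizes_succ_next_theory: "realizes \<Gamma> w \<Longrightarrow> realizes_succ (next_theory \<Gamma>) w"
proof (induction w arbitrary: \<Gamma>)
  case (Moment t cs)
  have \<Gamma>: "prime_theory \<Gamma>" "\<Gamma> \<inter> S = t"
    using Moment.prems by auto
  have "\<exists>\<Delta>'. next_theory \<Gamma> \<subseteq> \<Delta>' \<and> realizes_succ \<Delta>' c" if c: "c \<in> set cs" for c
  proof -
    obtain \<Delta> where \<Delta>: "\<Gamma> \<subseteq> \<Delta>" "realizes \<Delta> c"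
      using Moment.prems c by auto
    show ?thesis
      using Moment.IH[OF c \<Delta>(2)] next_theory_mono[OF \<Delta>(1)] by blast
  qed
  then show ?case
    using \<Gamma> sensible_next_theory prime_theory_next_theory by auto
qed

lemma realizes_succ_restrict:
  assumes "realizes_succ \<Delta> w" "\<Gamma> \<subseteq> \<Delta>" "prime_theory \<Gamma>" "\<Gamma> \<inter> S = \<Delta> \<inter> S"
  shows "realizes_succ \<Gamma> w"
proof (cases w)
  case (Moment t cs)
  have "\<exists>\<Delta>'. \<Gamma> \<subseteq> \<Delta>' \<and> realizes_succ \<Delta>' c" if c: "c \<in> set cs" for c
  proof -
    obtain \<Delta>' where "\<Delta> \<subseteq> \<Delta>'" "realizes_succ \<Delta>' c"
      using assms(1) Moment c by auto
    then show ?thesis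
      using assms(2) by blast
  qed
  then show ?thesis
    using assms Moment by simp
qed

lemma well_formed_label_subset: "well_formed w \<Longrightarrow> label w \<subseteq> S"
  unfolding well_formed_def using subtrees_self by blast

lemma Moment_in_moments:
  assumes \<Gamma>: "prime_theory \<Gamma>" and cs: "distinct cs"
    and children: "\<And>c. c \<in> set cs \<Longrightarrow> c \<in> moments \<and> (\<exists>\<Delta>. \<Gamma> \<subseteq> \<Delta> \<and> \<Delta> \<inter> S \<noteq> \<Gamma> \<inter> S \<and> realizes \<Delta> c)"
    and imps: "\<And>\<phi> \<psi>. Imp \<phi> \<psi> \<in> S \<Longrightarrow> Imp \<phi> \<psi> \<notin> \<Gamma> \<Longrightarrow> \<phi> \<notin> \<Gamma> \<Longrightarrow>
      \<exists>c\<in>set cs. \<phi> \<in> label c \<and> \<psi> \<notin> label c"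
  shows "Moment (\<Gamma> \<inter> S) cs \<in> moments \<and> realizes \<Gamma> (Moment (\<Gamma> \<inter> S) cs)"
proof -
  let ?w = "Moment (\<Gamma> \<inter> S) cs"
  have child: "\<Gamma> \<inter> S \<subset> label c \<and> well_formed c \<and> imp_witnessed c" if c: "c \<in> set cs" for c
  proof -
    obtain \<Delta> where "\<Gamma> \<subseteq> \<Delta>" "\<Delta> \<inter> S \<noteq> \<Gamma> \<inter> S" "realizes \<Delta> c"
      using children[OF c] by blast
    then have "\<Gamma> \<inter> S \<subset> label c"
      using realizes_label by auto
    then show ?thesis
      using children[OF c] unfolding moments_def by blast
  qed
  then have "well_formed ?w"
    using cs well_formed_Moment_iff by simp
  moreover have "\<exists>u\<in>subtrees ?w. \<phi> \<in> label u \<and> \<psi> \<notin> label u"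
    if imp: "Imp \<phi> \<psi> \<in> S" "Imp \<phi> \<psi> \<notin> \<Gamma> \<inter> S" for \<phi> \<psi>
  proof (cases "\<phi> \<in> \<Gamma>")
    case True
    have "\<psi> \<notin> \<Gamma>"
      using prime_theory_prov_mp[OF \<Gamma> ax_K, of \<psi> \<phi>] imp by blast
    then show ?thesis
      using True Imp_closed[OF imp(1)] by (intro bexI[of _ ?w]) auto
  next
    case False
    then obtain c where "c \<in> set cs" "\<phi> \<in> label c" "\<psi> \<notin> label c"
      using imps imp by blast
    then show ?thesis
      using child_in_subtrees by blast
  qed
  then have "imp_witnessed ?w"
    unfolding imp_witnessed_Moment_iff using child by blast
  moreover have "realizes \<Gamma> ?w"
    using \<Gamma> children by (auto dest: realizes_prime_theory)
  ultimately show ?thesis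
    unfolding moments_def by blast
qed

lemma moment_succ_Moment:
  "prime_theory \<Gamma> \<Longrightarrow>
    (\<And>c. c \<in> subtrees u \<Longrightarrow> \<exists>\<Delta>. \<Gamma> \<subseteq> \<Delta> \<and> \<Delta> \<inter> S \<noteq> \<Gamma> \<inter> S \<and> realizes_succ \<Delta> c \<Longrightarrow>
      \<exists>k\<in>set cs. moment_succ c k) \<Longrightarrow>
    realizes_succ \<Gamma> u \<Longrightarrow> moment_succ u (Moment (\<Gamma> \<inter> S) cs)"
proof (induction u)
  case (Moment t ds)
  have "\<exists>d\<in>subtrees (Moment (\<Gamma> \<inter> S) cs). moment_succ c d" if c: "c \<in> set ds" for c
  proof -
    obtain \<Delta> where \<Delta>: "\<Gamma> \<subseteq> \<Delta>" "realizes_succ \<Delta> c"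
      using Moment.prems(3) c by auto
    have c_sub: "subtrees c \<subseteq> subtrees (Moment t ds)"
      using subtrees_child[OF c] .
    show ?thesis
    proof (cases "\<Delta> \<inter> S = \<Gamma> \<inter> S")
      case True
      then have "realizes_succ \<Gamma> c"
        using realizes_succ_restrict[OF \<Delta>(2) \<Delta>(1) Moment.prems(1)] by simp
      then have "moment_succ c (Moment (\<Gamma> \<inter> S) cs)"
        using Moment.IH[OF c Moment.prems(1)] Moment.prems(2) c_sub by blast
      then show ?thesis
        using subtrees_self by blast
    next
      case False
      then obtain k where "k \<in> set cs" "moment_succ c k"
        using Moment.prems(2)[of c] \<Delta> c_sub subtrees_self by blast
      then show ?thesis
        using child_in_subtrees by blast
    qed
  qed
  then show ?case
    using Moment.prems(3) by simp
qed

lemma finite_Imp_pairs: "finite {(\<phi>, \<psi>). Imp \<phi> \<psi> \<in> S}"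
proof -
  have "{(\<phi>, \<psi>). Imp \<phi> \<psi> \<in> S} \<subseteq> (\<lambda>\<chi>. case \<chi> of Imp \<phi> \<psi> \<Rightarrow> (\<phi>, \<psi>) | _ \<Rightarrow> (Bot, Bot)) ` S"
    by (auto intro!: image_eqI)
  then show ?thesis
    using finite_S finite_subset by blast
qed

lemma Imp_witness_moment:
  assumes \<Gamma>: "prime_theory \<Gamma>" and imp: "Imp \<phi> \<psi> \<in> S" "Imp \<phi> \<psi> \<notin> \<Gamma>" "\<phi> \<notin> \<Gamma>"
    and build: "\<And>\<Delta>. \<Gamma> \<subseteq> \<Delta> \<Longrightarrow> \<Delta> \<inter> S \<noteq> \<Gamma> \<inter> S \<Longrightarrow> prime_theory \<Delta> \<Longrightarrow>
      \<exists>k\<in>moments. realizes \<Delta> k"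
  shows "\<exists>k. k \<in> moments \<and> (\<exists>\<Delta>. \<Gamma> \<subseteq> \<Delta> \<and> \<Delta> \<inter> S \<noteq> \<Gamma> \<inter> S \<and> realizes \<Delta> k) \<and>
    \<phi> \<in> label k \<and> \<psi> \<notin> label k"
proof -
  obtain \<Delta> where \<Delta>: "\<Gamma> \<subseteq> \<Delta>" "prime_theory \<Delta>" "\<phi> \<in> \<Delta>" "\<psi> \<notin> \<Delta>"
    using prime_theory_Imp_notin_iff[OF \<Gamma>] imp(2) by blast
  have "\<Delta> \<inter> S \<noteq> \<Gamma> \<inter> S"
    using Imp_closed[OF imp(1)] \<Delta>(3) imp(3) by blast
  moreover obtain k where k: "k \<in> moments" "realizes \<Delta> k"
    using build \<Delta> calculation by blast
  moreover have "\<phi> \<in> label k" "\<psi> \<notin> label k"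
    using realizes_label[OF k(2)] \<Delta>(3,4) Imp_closed[OF imp(1)] by auto
  ultimately show ?thesis
    using \<Delta>(1) by auto
qed

lemma build_moment_step:
  assumes \<Gamma>: "prime_theory \<Gamma>" and U: "finite U" "\<And>u. u \<in> U \<Longrightarrow> realizes_succ \<Gamma> u"
    and IH: "\<And>\<Delta> U. \<Gamma> \<subseteq> \<Delta> \<Longrightarrow> \<Delta> \<inter> S \<noteq> \<Gamma> \<inter> S \<Longrightarrow> prime_theory \<Delta> \<Longrightarrow> finite U \<Longrightarrow>
      (\<And>u. u \<in> U \<Longrightarrow> realizes_succ \<Delta> u) \<Longrightarrow> \<exists>w\<in>moments. realizes \<Delta> w \<and> (\<forall>u\<in>U. moment_succ u w)"
  shows "\<exists>w\<in>moments. realizes \<Gamma> w \<and> (\<forall>u\<in>U. moment_succ u w)"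
proof -
  let ?above = "\<lambda>k. k \<in> moments \<and> (\<exists>\<Delta>. \<Gamma> \<subseteq> \<Delta> \<and> \<Delta> \<inter> S \<noteq> \<Gamma> \<inter> S \<and> realizes \<Delta> k)"
  define Q where "Q = {c \<in> (\<Union>u\<in>U. subtrees u). \<exists>\<Delta>. \<Gamma> \<subseteq> \<Delta> \<and> \<Delta> \<inter> S \<noteq> \<Gamma> \<inter> S \<and> realizes_succ \<Delta> c}"
  define I where "I = {(\<phi>, \<psi>). Imp \<phi> \<psi> \<in> S \<and> Imp \<phi> \<psi> \<notin> \<Gamma> \<and> \<phi> \<notin> \<Gamma>}"
  have "\<exists>k. ?above k \<and> moment_succ c k" if c: "c \<in> Q" for c
  proof -
    obtain \<Delta> where \<Delta>: "\<Gamma> \<subseteq> \<Delta>" "\<Delta> \<inter> S \<noteq> \<Gamma> \<inter> S" "realizes_succ \<Delta> c"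
      using c unfolding Q_def by blast
    then obtain k where "k \<in> moments" "realizes \<Delta> k" "moment_succ c k"
      using IH[OF \<Delta>(1,2) realizes_succ_prime_theory[OF \<Delta>(3)], of "{c}"] by auto
    then show ?thesis
      using \<Delta>(1,2) by blast
  qed
  then obtain g where g: "\<And>c. c \<in> Q \<Longrightarrow> ?above (g c) \<and> moment_succ c (g c)"
    by metis
  have build: "\<exists>k\<in>moments. realizes \<Delta> k"
    if "\<Gamma> \<subseteq> \<Delta>" "\<Delta> \<inter> S \<noteq> \<Gamma> \<inter> S" "prime_theory \<Delta>" for \<Delta>
    using IH[OF that, of "{}"] by simp
  have "\<exists>k. ?above k \<and> fst i \<in> label k \<and> snd i \<notin> label k" if i: "i \<in> I" for i
  proof -
    obtain \<phi> \<psi> where i': "i = (\<phi>, \<psi>)" "Imp \<phi> \<psi> \<in> S" "Imp \<phi> \<psi> \<notin> \<Gamma>" "\<phi> \<notin> \<Gamma>"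
      using i unfolding I_def by blast
    show ?thesis
      using Imp_witness_moment[OF \<Gamma> i'(2-4) build] i'(1) by simp
  qed
  then obtain h where h: "\<And>i. i \<in> I \<Longrightarrow> ?above (h i) \<and> fst i \<in> label (h i) \<and> snd i \<notin> label (h i)"
    by metis
  have "finite Q"
    unfolding Q_def using U(1) finite_subtrees by auto
  moreover have "finite I"
    unfolding I_def by (rule finite_subset[OF _ finite_Imp_pairs]) auto
  ultimately obtain cs where cs: "set cs = g ` Q \<union> h ` I" "distinct cs"
    using finite_distinct_list by (metis finite_Un finite_imageI)
  have children: "?above c" if "c \<in> set cs" for c
    using that g h cs(1) by auto
  have imps: "\<exists>c\<in>set cs. \<phi> \<in> label c \<and> \<psi> \<notin> label c"
    if "Imp \<phi> \<psi> \<in> S" "Imp \<phi> \<psi> \<notin> \<Gamma>" "\<phi> \<notin> \<Gamma>" for \<phi> \<psi>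
    using h[of "(\<phi>, \<psi>)"] that cs(1) unfolding I_def by force
  have w: "Moment (\<Gamma> \<inter> S) cs \<in> moments \<and> realizes \<Gamma> (Moment (\<Gamma> \<inter> S) cs)"
    using Moment_in_moments[OF \<Gamma> cs(2) children imps] .
  have "moment_succ u (Moment (\<Gamma> \<inter> S) cs)" if u: "u \<in> U" for u
  proof (rule moment_succ_Moment[OF \<Gamma> _ U(2)[OF u]])
    fix c assume "c \<in> subtrees u" "\<exists>\<Delta>. \<Gamma> \<subseteq> \<Delta> \<and> \<Delta> \<inter> S \<noteq> \<Gamma> \<inter> S \<and> realizes_succ \<Delta> c"
    then have "c \<in> Q"
      unfolding Q_def using u by blast
    then show "\<exists>k\<in>set cs. moment_succ c k"
      using g cs(1) by blast
  qed
  then show ?thesis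
    using w by blast
qed

lemma build_moment:
  "prime_theory \<Gamma> \<Longrightarrow> finite U \<Longrightarrow> (\<And>u. u \<in> U \<Longrightarrow> realizes_succ \<Gamma> u) \<Longrightarrow>
    \<exists>w\<in>moments. realizes \<Gamma> w \<and> (\<forall>u\<in>U. moment_succ u w)"
proof (induction "card (S - \<Gamma> \<inter> S)" arbitrary: \<Gamma> U rule: less_induct)
  case less
  have "card (S - \<Delta> \<inter> S) < card (S - \<Gamma> \<inter> S)" if "\<Gamma> \<subseteq> \<Delta>" "\<Delta> \<inter> S \<noteq> \<Gamma> \<inter> S" for \<Delta>
    using that finite_S by (intro psubset_card_mono) auto
  then show ?case
    using build_moment_step[OF less.prems] less.hyps by blast
qed

lemma moment_of_prime_theory: "prime_theory \<Gamma> \<Longrightarrow> \<exists>w\<in>moments. label w = \<Gamma> \<inter> S"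
  using build_moment[of \<Gamma> "{}"] realizes_label by auto

lemma moment_succ_exists:
  assumes "realizes \<Gamma> w"
  shows "\<exists>w'\<in>moments. realizes (next_theory \<Gamma>) w' \<and> moment_succ w w'"
proof -
  have "prime_theory (next_theory \<Gamma>)"
    using assms prime_theory_next_theory realizes_prime_theory by blast
  then show ?thesis
    using build_moment[of "next_theory \<Gamma>" "{w}"] realizes_succ_next_theory[OF assms] by auto
qed

lemma moments_serial:
  assumes "w \<in> moments"
  shows "\<exists>w'\<in>moments. moment_succ w w'"
proof -
  obtain \<Gamma> where "realizes \<Gamma> w"
    using assms unfolding moments_def by blast
  then show ?thesis
    using moment_succ_exists by blast
qed

lemma finite_well_formed_label: "t \<subseteq> S \<Longrightarrow> finite {w. well_formed w \<and> label w = t}"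
proof (induction "card (S - t)" arbitrary: t rule: less_induct)
  case less
  define A where "A = (\<Union>t'\<in>{t'. t' \<subseteq> S \<and> t \<subset> t'}. {w. well_formed w \<and> label w = t'})"
  have "finite {w. well_formed w \<and> label w = t'}" if "t' \<subseteq> S" "t \<subset> t'" for t'
  proof -
    have "card (S - t') < card (S - t)"
      using that finite_S by (intro psubset_card_mono) auto
    then show ?thesis
      using less.hyps that(1) by blast
  qed
  then have "finite A"
    unfolding A_def using finite_S by (intro finite_UN_I) auto
  have "{w. well_formed w \<and> label w = t} \<subseteq> Moment t ` {cs. set cs \<subseteq> A \<and> length cs \<le> card A}"
  proof
    fix w assume "w \<in> {w. well_formed w \<and> label w = t}"
    then obtain cs where w: "w = Moment t cs" "well_formed (Moment t cs)"
      by (cases w) auto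
    then have "distinct cs" "set cs \<subseteq> A"
      unfolding A_def using well_formed_Moment_iff well_formed_label_subset by auto
    moreover from this have "length cs \<le> card A"
      using \<open>finite A\<close> by (metis card_mono distinct_card)
    ultimately show "w \<in> Moment t ` {cs. set cs \<subseteq> A \<and> length cs \<le> card A}"
      using w(1) by blast
  qed
  moreover have "finite (Moment t ` {cs. set cs \<subseteq> A \<and> length cs \<le> card A})"
    using finite_lists_length_le[OF \<open>finite A\<close>] by blast
  ultimately show ?case
    by (rule finite_subset)
qed

lemma finite_moments: "finite moments"
proof -
  have "moments \<subseteq> (\<Union>t\<in>Pow S. {w. well_formed w \<and> label w = t})"
    unfolding moments_def using well_formed_label_subset by blast
  moreover have "finite (\<Union>t\<in>Pow S. {w. well_formed w \<and> label w = t})"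
    using finite_well_formed_label finite_S by simp
  ultimately show ?thesis
    by (rule finite_subset)
qed

primrec char_fm :: "moment \<Rightarrow> fm" where
  "char_fm (Moment t cs) = Imp (Conj t) (Or (Disj (S - t)) (Disj (set (map char_fm cs))))"

lemma char_fm_notin_iff:
  "prime_theory \<Gamma> \<Longrightarrow> well_formed w \<Longrightarrow> char_fm w \<notin> \<Gamma> \<longleftrightarrow> (\<exists>\<Delta>. \<Gamma> \<subseteq> \<Delta> \<and> realizes \<Delta> w)"
proof (induction w arbitrary: \<Gamma>)
  case (Moment t cs)
  have t: "t \<subseteq> S" "finite t" and wf: "\<And>c. c \<in> set cs \<Longrightarrow> well_formed c"
    using Moment.prems(2) well_formed_Moment_iff finite_S finite_subset by auto
  have body: "Conj t \<in> \<Delta> \<and> Or (Disj (S - t)) (Disj (set (map char_fm cs))) \<notin> \<Delta> \<longleftrightarrow>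
      realizes \<Delta> (Moment t cs)" if \<Delta>: "prime_theory \<Delta>" for \<Delta>
  proof -
    have "Conj t \<in> \<Delta> \<longleftrightarrow> t \<subseteq> \<Delta>"
      using prime_theory_Conj[OF \<Delta> t(2)] .
    moreover have "Disj (S - t) \<notin> \<Delta> \<longleftrightarrow> (S - t) \<inter> \<Delta> = {}"
      using prime_theory_Disj[OF \<Delta>] finite_S by simp
    moreover have "Disj (set (map char_fm cs)) \<notin> \<Delta> \<longleftrightarrow> (\<forall>c\<in>set cs. char_fm c \<notin> \<Delta>)"
      using prime_theory_Disj[OF \<Delta>] by auto
    moreover have "(\<forall>c\<in>set cs. char_fm c \<notin> \<Delta>) \<longleftrightarrow> (\<forall>c\<in>set cs. \<exists>\<Delta>'. \<Delta> \<subseteq> \<Delta>' \<and> realizes \<Delta>' c)"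
      using Moment.IH \<Delta> wf by blast
    ultimately show ?thesis
      using prime_theory_Or[OF \<Delta>] \<Delta> t(1) by auto
  qed
  have "char_fm (Moment t cs) \<notin> \<Gamma> \<longleftrightarrow> (\<exists>\<Delta>. \<Gamma> \<subseteq> \<Delta> \<and> prime_theory \<Delta> \<and> realizes \<Delta> (Moment t cs))"
    using prime_theory_Imp_notin_iff[OF Moment.prems(1)] body by (simp cong: conj_cong)
  then show ?case
    using realizes_prime_theory by blast
qed

sublocale eventualities moments moment_succ "\<lambda>w. {\<phi>. Diam \<phi> \<in> label w}" "\<lambda>\<phi> w. \<phi> \<in> label w"
proof
  fix v v' \<phi>
  assume "v \<in> moments" "moment_succ v v'" "\<phi> \<in> {\<phi>. Diam \<phi> \<in> label v}"
  then show "\<phi> \<in> label v \<or> \<phi> \<in> {\<phi>. Diam \<phi> \<in> label v'}"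
    using moment_succ_sensible moments_label_subset unfolding sensible_def by blast
qed

text \<open>\<open>reaches_fm \<phi>\<close> follows from \<open>\<phi>\<close> and from \<open>Next (reaches_fm \<phi>)\<close>, so by the induction
  rule it follows from \<open>Diam \<phi>\<close>; and it fails at every moment from which \<open>\<phi>\<close> is unreachable.\<close>

definition reaches_fm :: "fm \<Rightarrow> fm" where
  "reaches_fm \<phi> = Conj (char_fm ` {v \<in> moments. \<not> reaches \<phi> v})"

lemma reaches_fm_iff:
  assumes \<Gamma>: "prime_theory \<Gamma>"
  shows "reaches_fm \<phi> \<in> \<Gamma> \<longleftrightarrow>
    (\<forall>v \<Delta>. v \<in> moments \<longrightarrow> \<Gamma> \<subseteq> \<Delta> \<longrightarrow> realizes \<Delta> v \<longrightarrow> reaches \<phi> v)"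
proof -
  have "finite (char_fm ` {v \<in> moments. \<not> reaches \<phi> v})"
    using finite_moments by simp
  then have "reaches_fm \<phi> \<in> \<Gamma> \<longleftrightarrow> (\<forall>v\<in>{v \<in> moments. \<not> reaches \<phi> v}. char_fm v \<in> \<Gamma>)"
    unfolding reaches_fm_def using prime_theory_Conj[OF \<Gamma>] by auto
  then show ?thesis
    using char_fm_notin_iff[OF \<Gamma>] unfolding moments_def by blast
qed

lemma prov_Imp_reaches_fm:
  assumes "\<phi> \<in> S"
  shows "prov (Imp \<phi> (reaches_fm \<phi>))"
proof (rule prov_Imp_if_prime_theory)
  fix \<Gamma> assume \<Gamma>: "prime_theory \<Gamma>" "\<phi> \<in> \<Gamma>"
  have "reaches \<phi> v" if "v \<in> moments" "\<Gamma> \<subseteq> \<Delta>" "realizes \<Delta> v" for v \<Delta>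
    using realizes_label[OF that(3)] that(1,2) \<Gamma>(2) assms reaches.intros(1) by blast
  then show "reaches_fm \<phi> \<in> \<Gamma>"
    using reaches_fm_iff[OF \<Gamma>(1)] by blast
qed

lemma prov_Next_reaches_fm: "prov (Imp (Next (reaches_fm \<phi>)) (reaches_fm \<phi>))"
proof (rule prov_Imp_if_prime_theory)
  fix \<Gamma> assume \<Gamma>: "prime_theory \<Gamma>" "Next (reaches_fm \<phi>) \<in> \<Gamma>"
  have "reaches \<phi> v" if v: "v \<in> moments" "\<Gamma> \<subseteq> \<Delta>" "realizes \<Delta> v" for v \<Delta>
  proof -
    obtain v' where v': "v' \<in> moments" "realizes (next_theory \<Delta>) v'" "moment_succ v v'"
      using moment_succ_exists[OF v(3)] by blast
    have "reaches_fm \<phi> \<in> next_theory \<Gamma>" "next_theory \<Gamma> \<subseteq> next_theory \<Delta>"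
      using \<Gamma>(2) next_theory_mono[OF v(2)] unfolding next_theory_def by auto
    then have "reaches \<phi> v'"
      using reaches_fm_iff[OF prime_theory_next_theory[OF \<Gamma>(1)]] v' by blast
    then show ?thesis
      using reaches.intros(2)[OF v(1) v'(1) v'(3)] by blast
  qed
  then show "reaches_fm \<phi> \<in> \<Gamma>"
    using reaches_fm_iff[OF \<Gamma>(1)] by blast
qed

lemma Diam_reaches:
  assumes w: "w \<in> moments" and Diam: "Diam \<phi> \<in> label w"
  shows "reaches \<phi> w"
proof -
  have "\<phi> \<in> S"
    using Diam w moments_label_subset Diam_closed by blast
  then have "prov (Imp (Diam \<phi>) (reaches_fm \<phi>))"
    using prov_Imp_trans[OF diam_mono[OF prov_Imp_reaches_fm] ind[OF prov_Next_reaches_fm]] by blast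
  moreover obtain \<Gamma> where \<Gamma>: "realizes \<Gamma> w"
    using w unfolding moments_def by blast
  moreover have "Diam \<phi> \<in> \<Gamma>"
    using Diam realizes_label[OF \<Gamma>] by auto
  ultimately have "reaches_fm \<phi> \<in> \<Gamma>"
    using prime_theory_prov_mp realizes_prime_theory by blast
  then show ?thesis
    using reaches_fm_iff[OF realizes_prime_theory[OF \<Gamma>]] \<Gamma> w by blast
qed

lemma fair_path_from_moment: "w \<in> moments \<Longrightarrow> \<exists>x\<in>fair_paths. x 0 = w"
proof (rule fair_path_exists)
  fix v assume "v \<in> moments"
  have "inj Diam"
    by (auto intro: injI)
  then show "finite {\<phi>. Diam \<phi> \<in> label v}"
    using finite_vimageI[of "label v" Diam] moments_label_subset[OF \<open>v \<in> moments\<close>] finite_S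
    unfolding vimage_def by (meson finite_subset)
qed (use moments_serial Diam_reaches in auto)

section \<open>The model on fair paths of moments\<close>

lemma fair_path_label: "x \<in> fair_paths \<Longrightarrow> \<exists>\<Gamma>. prime_theory \<Gamma> \<and> label (x i) = \<Gamma> \<inter> S"
  using fair_pathsD(1) moments_label by blast

lemma lift_path_to_subtree:
  assumes x: "\<And>i. moment_succ (x i) (x (Suc i))" and v: "v \<in> subtrees (x 0)"
  shows "\<exists>y. y 0 = v \<and> (\<forall>i. y i \<in> subtrees (x i) \<and> moment_succ (y i) (y (Suc i)))"
proof -
  have "\<forall>i u. \<exists>u'. u \<in> subtrees (x i) \<longrightarrow> u' \<in> subtrees (x (Suc i)) \<and> moment_succ u u'"
    using moment_succ_subtree[OF x] by blast
  then obtain step where step: "\<And>i u. u \<in> subtrees (x i) \<Longrightarrow>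
      step i u \<in> subtrees (x (Suc i)) \<and> moment_succ u (step i u)"
    by metis
  define y where "y = rec_nat v step"
  have y_sub: "y i \<in> subtrees (x i)" for i
    by (induction i) (simp_all add: y_def v step)
  moreover have "moment_succ (y i) (y (Suc i))" for i
    using step[OF y_sub[of i]] by (simp add: y_def)
  ultimately show ?thesis
    by (intro exI[of _ y]) (simp add: y_def)
qed

definition nbhd :: "(nat \<Rightarrow> moment) \<Rightarrow> nat \<Rightarrow> (nat \<Rightarrow> moment) set" where
  "nbhd x n = {y \<in> fair_paths. \<forall>i\<le>n. y i \<in> subtrees (x i)}"

lemma nbhd_antimono: "m \<le> n \<Longrightarrow> nbhd x n \<subseteq> nbhd x m"
  unfolding nbhd_def by auto

lemma nbhd_self: "x \<in> fair_paths \<Longrightarrow> x \<in> nbhd x n"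
  unfolding nbhd_def by simp

lemma nbhd_subset_nbhd: "y \<in> nbhd x n \<Longrightarrow> nbhd y n \<subseteq> nbhd x n"
  unfolding nbhd_def using subtrees_trans by blast

lemma fair_path_through_subtree:
  assumes x: "x \<in> fair_paths" and v: "v \<in> subtrees (x 0)"
  shows "\<exists>y\<in>nbhd x n. y 0 = v"
proof -
  obtain y where y: "y 0 = v" "\<And>i. y i \<in> subtrees (x i)" "\<And>i. moment_succ (y i) (y (Suc i))"
    using lift_path_to_subtree[OF fair_pathsD(2)[OF x] v] by blast
  have y_moments: "y i \<in> moments" for i
    using moments_subtree[OF fair_pathsD(1)[OF x] y(2)] .
  obtain z where z: "z \<in> fair_paths" "z 0 = y n"
    using fair_path_from_moment[OF y_moments] by blast
  have "(\<lambda>i. if i \<le> n then y i else z (i - n)) \<in> fair_paths"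
    using fair_paths_prepend[of n y z] y_moments y(3) z by blast
  then show ?thesis
    unfolding nbhd_def using y(1,2) by (intro bexI[of _ "\<lambda>i. if i \<le> n then y i else z (i - n)"]) auto
qed

lemma istopology_nbhd_opens: "istopology (\<lambda>U. U \<subseteq> fair_paths \<and> (\<forall>x\<in>U. \<exists>n. nbhd x n \<subseteq> U))"
  unfolding istopology_def
proof (rule conjI; intro allI impI)
  fix U V
  assume UV: "U \<subseteq> fair_paths \<and> (\<forall>x\<in>U. \<exists>n. nbhd x n \<subseteq> U)"
    "V \<subseteq> fair_paths \<and> (\<forall>x\<in>V. \<exists>n. nbhd x n \<subseteq> V)"
  have UV_nbhd: "\<exists>n. nbhd x n \<subseteq> U \<inter> V" if x: "x \<in> U \<inter> V" for x
  proof -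
    obtain m n where "nbhd x m \<subseteq> U" "nbhd x n \<subseteq> V"
      using conjunct2[OF UV(1)] conjunct2[OF UV(2)] x by (meson IntD1 IntD2)
    then show ?thesis
      using nbhd_antimono[of m "max m n" x] nbhd_antimono[of n "max m n" x]
      by (intro exI[of _ "max m n"]) auto
  qed
  show "U \<inter> V \<subseteq> fair_paths \<and> (\<forall>x\<in>U \<inter> V. \<exists>n. nbhd x n \<subseteq> U \<inter> V)"
  proof (intro conjI ballI)
    show "U \<inter> V \<subseteq> fair_paths"
      using le_infI1[OF conjunct1[OF UV(1)]] .
  qed (rule UV_nbhd)
next
  fix \<K> assume \<K>: "\<forall>U\<in>\<K>. U \<subseteq> fair_paths \<and> (\<forall>x\<in>U. \<exists>n. nbhd x n \<subseteq> U)"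
  show "\<Union>\<K> \<subseteq> fair_paths \<and> (\<forall>x\<in>\<Union>\<K>. \<exists>n. nbhd x n \<subseteq> \<Union>\<K>)"
  proof (intro conjI ballI)
    show "\<Union>\<K> \<subseteq> fair_paths"
      using \<K> by (simp add: Union_least)
  next
    fix x assume "x \<in> \<Union>\<K>"
    then obtain U where U: "U \<in> \<K>" "x \<in> U"
      by (rule UnionE)
    then obtain n where "nbhd x n \<subseteq> U"
      using bspec[OF conjunct2[OF bspec[OF \<K> U(1)]] U(2)] by (elim exE)
    then show "\<exists>n. nbhd x n \<subseteq> \<Union>\<K>"
      using Union_upper[OF U(1)] by (intro exI[of _ n]) (rule order_trans)
  qed
qed

definition path_topology :: "(nat \<Rightarrow> moment) topology" where
  "path_topology = topology (\<lambda>U. U \<subseteq> fair_paths \<and> (\<forall>x\<in>U. \<exists>n. nbhd x n \<subseteq> U))"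

lemma openin_path_topology:
  "openin path_topology U \<longleftrightarrow> U \<subseteq> fair_paths \<and> (\<forall>x\<in>U. \<exists>n. nbhd x n \<subseteq> U)"
  unfolding path_topology_def using istopology_nbhd_opens by simp

lemma topspace_path_topology: "topspace path_topology = fair_paths"
  unfolding topspace_def openin_path_topology nbhd_def by blast

lemma openin_nbhd: "openin path_topology (nbhd x n)"
  unfolding openin_path_topology
proof (intro conjI ballI)
  show "nbhd x n \<subseteq> fair_paths"
    by (simp add: nbhd_def)
next
  fix y assume "y \<in> nbhd x n"
  then show "\<exists>m. nbhd y m \<subseteq> nbhd x n"
    by (intro exI[of _ n]) (rule nbhd_subset_nbhd)
qed

lemma interior_of_path_topology:
  "path_topology interior_of A = {x \<in> fair_paths. \<exists>n. nbhd x n \<subseteq> A}"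
proof (intro equalityI subsetI)
  fix x assume "x \<in> path_topology interior_of A"
  then obtain U where U: "openin path_topology U" "x \<in> U" "U \<subseteq> A"
    unfolding interior_of_def by blast
  then have "x \<in> fair_paths" "\<exists>n. nbhd x n \<subseteq> U"
    unfolding openin_path_topology by auto
  then show "x \<in> {x \<in> fair_paths. \<exists>n. nbhd x n \<subseteq> A}"
    using U(3) by (metis (mono_tags, lifting) mem_Collect_eq order_trans)
next
  fix x assume "x \<in> {x \<in> fair_paths. \<exists>n. nbhd x n \<subseteq> A}"
  then obtain n where "x \<in> fair_paths" "nbhd x n \<subseteq> A"
    by blast
  then show "x \<in> path_topology interior_of A"
    unfolding interior_of_def using openin_nbhd[of x n] nbhd_self[of x n] by blast
qed

definition shift :: "(nat \<Rightarrow> moment) \<Rightarrow> nat \<Rightarrow> moment" where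
  "shift x = (\<lambda>i. x (Suc i))"

lemma funpow_shift: "(shift ^^ n) x = (\<lambda>i. x (i + n))"
  by (induction n) (auto simp: shift_def)

lemma shift_fair_paths: "x \<in> fair_paths \<Longrightarrow> shift x \<in> fair_paths"
  unfolding shift_def by (rule fair_paths_shift)

lemma continuous_map_shift: "continuous_map path_topology path_topology shift"
  unfolding continuous_map_def topspace_path_topology
proof (intro conjI allI impI)
  show "shift \<in> fair_paths \<rightarrow> fair_paths"
    using shift_fair_paths by blast
next
  fix U assume "openin path_topology U"
  then have U: "U \<subseteq> fair_paths" "\<And>x. x \<in> U \<Longrightarrow> \<exists>n. nbhd x n \<subseteq> U"
    unfolding openin_path_topology by auto
  have "nbhd x (Suc n) \<subseteq> {x \<in> fair_paths. shift x \<in> U}" if "nbhd (shift x) n \<subseteq> U" for x n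
  proof
    fix y assume "y \<in> nbhd x (Suc n)"
    then have "shift y \<in> nbhd (shift x) n" "y \<in> fair_paths"
      unfolding nbhd_def shift_def using shift_fair_paths[unfolded shift_def] by auto
    then show "y \<in> {x \<in> fair_paths. shift x \<in> U}"
      using that by blast
  qed
  then show "openin path_topology {x \<in> fair_paths. shift x \<in> U}"
    unfolding openin_path_topology using U(2) by blast
qed

definition path_valuation :: "nat \<Rightarrow> (nat \<Rightarrow> moment) set" where
  "path_valuation p = {x \<in> fair_paths. Var p \<in> label (x 0)}"

lemma openin_path_valuation: "openin path_topology (path_valuation p)"
  unfolding openin_path_topology path_valuation_def
proof (intro conjI ballI)
  fix x assume "x \<in> {x \<in> fair_paths. Var p \<in> label (x 0)}"
  then have "nbhd x 0 \<subseteq> {x \<in> fair_paths. Var p \<in> label (x 0)}"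
    unfolding nbhd_def using moments_label_mono fair_pathsD(1) by blast
  then show "\<exists>n. nbhd x n \<subseteq> {x \<in> fair_paths. Var p \<in> label (x 0)}"
    by blast
qed blast

lemma moments_label_Bot: "w \<in> moments \<Longrightarrow> Bot \<notin> label w"
  using moments_label prime_theory_Bot by blast

lemma moments_label_And:
  assumes "w \<in> moments" "And \<phi> \<psi> \<in> S"
  shows "And \<phi> \<psi> \<in> label w \<longleftrightarrow> \<phi> \<in> label w \<and> \<psi> \<in> label w"
proof -
  obtain \<Gamma> where "prime_theory \<Gamma>" "label w = \<Gamma> \<inter> S"
    using moments_label[OF assms(1)] by (elim exE conjE)
  then show ?thesis
    using prime_theory_And[of \<Gamma> \<phi> \<psi>] And_closed[OF assms(2)] assms(2) by simp
qed

lemma moments_label_Or: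
  assumes "w \<in> moments" "Or \<phi> \<psi> \<in> S"
  shows "Or \<phi> \<psi> \<in> label w \<longleftrightarrow> \<phi> \<in> label w \<or> \<psi> \<in> label w"
proof -
  obtain \<Gamma> where "prime_theory \<Gamma>" "label w = \<Gamma> \<inter> S"
    using moments_label[OF assms(1)] by (elim exE conjE)
  then show ?thesis
    using prime_theory_Or[of \<Gamma> \<phi> \<psi>] Or_closed[OF assms(2)] assms(2) by simp
qed

lemma label_Imp_iff:
  assumes x: "x \<in> fair_paths" and imp: "Imp \<phi> \<psi> \<in> S"
  shows "Imp \<phi> \<psi> \<in> label (x 0) \<longleftrightarrow> (\<exists>n. \<forall>y\<in>nbhd x n. \<phi> \<in> label (y 0) \<longrightarrow> \<psi> \<in> label (y 0))"
proof
  assume Imp: "Imp \<phi> \<psi> \<in> label (x 0)"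
  have "\<phi> \<in> label (y 0) \<longrightarrow> \<psi> \<in> label (y 0)" if y: "y \<in> nbhd x 0" for y
  proof -
    have "y 0 \<in> subtrees (x 0)" "y \<in> fair_paths"
      using y unfolding nbhd_def by auto
    then have "Imp \<phi> \<psi> \<in> label (y 0)"
      using moments_label_mono[OF fair_pathsD(1)[OF x]] Imp by blast
    moreover obtain \<Gamma> where "prime_theory \<Gamma>" "label (y 0) = \<Gamma> \<inter> S"
      using fair_path_label[OF \<open>y \<in> fair_paths\<close>] by blast
    ultimately show ?thesis
      using prime_theory_mp Imp_closed[OF imp] by auto
  qed
  then show "\<exists>n. \<forall>y\<in>nbhd x n. \<phi> \<in> label (y 0) \<longrightarrow> \<psi> \<in> label (y 0)"
    by blast
next
  assume "\<exists>n. \<forall>y\<in>nbhd x n. \<phi> \<in> label (y 0) \<longrightarrow> \<psi> \<in> label (y 0)"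
  then obtain n where n: "\<forall>y\<in>nbhd x n. \<phi> \<in> label (y 0) \<longrightarrow> \<psi> \<in> label (y 0)"
    by blast
  show "Imp \<phi> \<psi> \<in> label (x 0)"
  proof (rule ccontr)
    assume "Imp \<phi> \<psi> \<notin> label (x 0)"
    moreover have "imp_witnessed (x 0)"
      using fair_pathsD(1)[OF x] unfolding moments_def by blast
    ultimately obtain v where v: "v \<in> subtrees (x 0)" "\<phi> \<in> label v" "\<psi> \<notin> label v"
      using imp subtrees_self unfolding imp_witnessed_def by blast
    then obtain y where "y \<in> nbhd x n" "y 0 = v"
      using fair_path_through_subtree[OF x] by blast
    then show False
      using n v by blast
  qed
qed

lemma label_Next_iff:
  assumes "x \<in> fair_paths" "Next \<phi> \<in> S"
  shows "Next \<phi> \<in> label (x 0) \<longleftrightarrow> \<phi> \<in> label (x 1)"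
  using moment_succ_sensible[OF fair_pathsD(2)[OF assms(1), of 0]] assms(2)
  unfolding sensible_def by simp

lemma label_Diam_iff:
  assumes x: "x \<in> fair_paths" and Diam: "Diam \<phi> \<in> S"
  shows "Diam \<phi> \<in> label (x 0) \<longleftrightarrow> (\<exists>n. \<phi> \<in> label (x n))"
proof
  assume "Diam \<phi> \<in> label (x 0)"
  then show "\<exists>n. \<phi> \<in> label (x n)"
    using fair_pathsD(3)[OF x, of \<phi> 0] by auto
next
  assume "\<exists>n. \<phi> \<in> label (x n)"
  then obtain n where n: "\<phi> \<in> label (x n)"
    by blast
  have "Diam \<phi> \<in> label (x n)"
  proof -
    obtain \<Gamma> where "prime_theory \<Gamma>" "label (x n) = \<Gamma> \<inter> S"
      using fair_path_label[OF x, of n] by (elim exE conjE)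
    then show ?thesis
      using n Diam prime_theory_Diam by auto
  qed
  moreover have "Diam \<phi> \<in> label (x k)" if "Diam \<phi> \<in> label (x (Suc k))" for k
    using moment_succ_sensible[OF fair_pathsD(2)[OF x, of k]] Diam that
    unfolding sensible_def by blast
  ultimately show "Diam \<phi> \<in> label (x 0)"
    by (induction n) auto
qed

lemma sem_path_model:
  "\<phi> \<in> S \<Longrightarrow> sem path_topology shift path_valuation \<phi> = {x \<in> fair_paths. \<phi> \<in> label (x 0)}"
proof (induction \<phi>)
  case (Var p)
  then show ?case
    by (simp add: path_valuation_def)
next
  case Bot
  then show ?case
    using moments_label_Bot[OF fair_pathsD(1)] by auto
next
  case (And \<phi> \<psi>)
  then show ?case
    using And_closed[OF And.prems] moments_label_And[OF fair_pathsD(1) And.prems] by auto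
next
  case (Or \<phi> \<psi>)
  then show ?case
    using Or_closed[OF Or.prems] moments_label_Or[OF fair_pathsD(1) Or.prems] by auto
next
  case (Imp \<phi> \<psi>)
  let ?A = "{x \<in> fair_paths. \<phi> \<in> label (x 0)}" and ?B = "{x \<in> fair_paths. \<psi> \<in> label (x 0)}"
  have "sem path_topology shift path_valuation (Imp \<phi> \<psi>) =
      path_topology interior_of (fair_paths - ?A \<union> ?B)"
    using Imp.IH Imp_closed[OF Imp.prems] by (simp add: topspace_path_topology)
  also have "\<dots> = {x \<in> fair_paths. \<exists>n. \<forall>y\<in>nbhd x n. \<phi> \<in> label (y 0) \<longrightarrow> \<psi> \<in> label (y 0)}"
  proof -
    have "nbhd x n \<subseteq> fair_paths - ?A \<union> ?B \<longleftrightarrow> (\<forall>y\<in>nbhd x n. \<phi> \<in> label (y 0) \<longrightarrow> \<psi> \<in> label (y 0))"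
      for x n
      unfolding nbhd_def by auto
    then show ?thesis
      unfolding interior_of_path_topology by simp
  qed
  also have "\<dots> = {x \<in> fair_paths. Imp \<phi> \<psi> \<in> label (x 0)}"
    using label_Imp_iff[OF _ Imp.prems] by (simp cong: conj_cong)
  finally show ?case .
next
  case (Next \<phi>)
  then show ?case
    using label_Next_iff Next_closed shift_fair_paths
    by (auto simp: topspace_path_topology shift_def)
next
  case (Diam \<phi>)
  have "(shift ^^ n) x \<in> fair_paths" if "x \<in> fair_paths" for x n
    using that shift_fair_paths by (induction n) auto
  then show ?case
    using Diam Diam_closed label_Diam_iff by (auto simp: topspace_path_topology funpow_shift)
qed

lemma path_space_embeds: "\<exists>e :: (nat \<Rightarrow> moment) \<Rightarrow> nat set. inj_on e (topspace path_topology)"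
proof -
  obtain e :: "(nat \<Rightarrow> moment) \<Rightarrow> nat set" where e: "inj_on e {x. \<forall>i. x i \<in> moments}"
    using inj_on_paths_into_nat_sets[OF countable_finite[OF finite_moments]] by blast
  have "topspace path_topology \<subseteq> {x. \<forall>i. x i \<in> moments}"
    unfolding topspace_path_topology using fair_pathsD(1) by blast
  then show ?thesis
    using inj_on_subset[OF e] by blast
qed

lemma countermodel:
  assumes "\<phi> \<in> S" "prime_theory \<Gamma>" "\<phi> \<notin> \<Gamma>"
  shows "sem path_topology shift path_valuation \<phi> \<noteq> topspace path_topology"
proof -
  obtain w where "w \<in> moments" "label w = \<Gamma> \<inter> S"
    using moment_of_prime_theory[OF assms(2)] by blast
  moreover obtain x where "x \<in> fair_paths" "x 0 = w"
    using fair_path_from_moment[OF calculation(1)] by blast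
  ultimately show ?thesis
    using sem_path_model[OF assms(1)] assms(3) topspace_path_topology by auto
qed

end

section \<open>Completeness\<close>

primrec subformulas :: "fm \<Rightarrow> fm set" where
  "subformulas (Var p) = {Var p}"
| "subformulas Bot = {Bot}"
| "subformulas (And \<phi> \<psi>) = insert (And \<phi> \<psi>) (subformulas \<phi> \<union> subformulas \<psi>)"
| "subformulas (Or \<phi> \<psi>) = insert (Or \<phi> \<psi>) (subformulas \<phi> \<union> subformulas \<psi>)"
| "subformulas (Imp \<phi> \<psi>) = insert (Imp \<phi> \<psi>) (subformulas \<phi> \<union> subformulas \<psi>)"
| "subformulas (Next \<phi>) = insert (Next \<phi>) (subformulas \<phi>)"
| "subformulas (Diam \<phi>) = insert (Diam \<phi>) (subformulas \<phi>)"

lemma subformulas_self: "\<phi> \<in> subformulas \<phi>"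
  by (cases \<phi>) auto

lemma subformulas_trans: "\<psi> \<in> subformulas \<phi> \<Longrightarrow> subformulas \<psi> \<subseteq> subformulas \<phi>"
  by (induction \<phi>) auto

lemma subformula_closed_subformulas: "subformula_closed (subformulas \<phi>)"
proof
  show "finite (subformulas \<phi>)"
    by (induction \<phi>) auto
qed (use subformulas_trans subformulas_self in fastforce)+

theorem theorem8p4:
  fixes \<phi> :: fm
  assumes big: "\<exists>g :: nat set set \<Rightarrow> 'a. inj g"
    and valid: "valid_over TYPE('a) \<phi>"
  shows "prov \<phi>"
proof (rule ccontr)
  assume "\<not> prov \<phi>"
  then obtain \<Gamma> where \<Gamma>: "prime_theory \<Gamma>" "\<phi> \<notin> \<Gamma>"
    by (rule prime_theory_omitting)
  interpret subformula_closed "subformulas \<phi>"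
    by (rule subformula_closed_subformulas)
  obtain g :: "nat set set \<Rightarrow> 'a" where "inj g"
    using big by blast
  moreover obtain e :: "(nat \<Rightarrow> moment) \<Rightarrow> nat set" where "inj_on e (topspace path_topology)"
    using path_space_embeds by blast
  ultimately have inj: "inj_on (\<lambda>x. g {e x}) (topspace path_topology)"
    by (rule inj_on_singleton_comp)
  have "dynamical_system path_topology shift"
    unfolding dynamical_system_def by (rule continuous_map_shift)
  then have "sem path_topology shift path_valuation \<phi> = topspace path_topology"
    by (rule valid_over_sem_eq_topspace[OF valid _ openin_path_valuation inj])
  then show False
    using countermodel[OF subformulas_self \<Gamma>] by contradiction
qed

end
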